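(* Let $X_1,X_2$, $A,B,C,D$, $c_A,c_D,L$, $X$, $\mathcal{A}$, $\mathcal{D}$, $M_1,M_2$ be as in the context, and assume that the relative bound estimates hold with $L=0$. Assume moreover that $$\|\mathcal{D}x\|_X\lesssim\|\mathcal{A}x\|_X\quad\text{for all }x\in\mathsf{D}(\mathcal{D})=\mathsf{D}(\mathcal{A}).$$ (a) If $A$ and $D$ are sectorial, then for each $\psi\in[\omega(A)\vee\omega(D),\pi)$ the following are equivalent: (1) $\mathcal{A}$ is sectorial of angle $\psi$; (2) $\overline{\mathsf{R}(\mathcal{A})}=X$, and for all $\phi>\psi$ and for one $j\in\{1,2\}$, $M_j(\lambda)^{-1}\in\mathscr{L}(X_j)$ for all $\lambda\in\complement\overline{\Sigma_\phi}$ and $\sup\{\|M_j(\lambda)^{-1}\|:\lambda\in\complement\overline{\Sigma_\phi}\}<\infty$. (b) If $A$ and $D$ are $\mathcal{R}$-sectorial, then for each $\psi\in[\omega_{\mathcal{R}}(A)\vee\omega_{\mathcal{R}}(D),\pi)$ the following are equivalent: (1) $\mathcal{A}$ is $\mathcal{R}$-sectorial of angle $\psi$; (2) $\overline{\mathsf{R}(\mathcal{A})}=X$, and for all $\phi>\psi$ and for one $j\in\{1,2\}$, $M_j(\lambda)^{-1}\in\mathscr{L}(X_j)$ for all $\lambda\in\complement\overline{\Sigma_\phi}$ and $\mathcal{R}(M_j(\lambda)^{-1}:\lambda\in\complement\overline{\Sigma_\phi})<\infty$. (c) If $X$ is reflexive, then the condition $\overline{\mathsf{R}(\mathcal{A})}=X$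 can be removed from (a)(2) and (b)(2).
   Context: All Banach spaces are complex. For $\psi\in(0,\pi)$, $\Sigma_\psi=\{z\in\mathbb{C}\setminus\{0\}:|\arg z|<\psi\}$ and $\complement\overline{\Sigma_\psi}=\mathbb{C}\setminus\overline{\Sigma_\psi}$. A linear operator $T$ on a Banach space $Y$ is sectorial if there is $\omega\in(0,\pi)$ with $\sigma(T)\subseteq\overline{\Sigma_\omega}$, $\overline{\mathsf{D}(T)}=\overline{\mathsf{R}(T)}=Y$ and $\sup_{\lambda\in\complement\overline{\Sigma_\omega}}\|\lambda(\lambda-T)^{-1}\|<\infty$; the infimum of such $\omega$ is $\omega(T)$. A family $\mathscr{J}\subseteq\mathscr{L}(E,F)$ is $\mathcal{R}$-bounded if there is $K$ with $\mathbb{E}\|\sum_{n=1}^m\varepsilon_nT_nx_n\|_F^2\le K^2\mathbb{E}\|\sum_{n=1}^m\varepsilon_nx_n\|_E^2$ for all $m$, $T_n\in\mathscr{J}$, $x_n\in E$, where $(\varepsilon_n)$ are independent random variables with $\mathbb{P}(\varepsilon_n=\pm1)=1/2$; the least such $K$ is $\mathcal{R}(\mathscr{J})$. A sectorial $T$ is $\mathcal{R}$-sectorial if for some $\sigma\in(\omega(T),\pi)$ the family $\{\lambda(\lambda-T)^{-1}:\lambda\in\complement\overline{\Sigma_\sigma}\}$ is $\mathcal{R}$-bounded; $\omega_{\mathcal{R}}(T)$ is the infimum of such $\sigma$. "Sectorial (resp. $\mathcal{R}$-sectorial) of angle $\psi$" means sectorial with $\omega(\cdot)\le\psi$ (resp.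 $\mathcal{R}$-sectorial with $\omega_{\mathcal{R}}(\cdot)\le\psi$). Setting: $X_1,X_2$ Banach spaces; $A:\mathsf{D}(A)\subseteq X_1\to X_1$ and $D:\mathsf{D}(D)\subseteq X_2\to X_2$ closed densely defined linear operators; $B:\mathsf{D}(B)\subseteq X_2\to X_1$, $C:\mathsf{D}(C)\subseteq X_1\to X_2$ linear with $\mathsf{D}(D)\subseteq\mathsf{D}(B)$, $\mathsf{D}(A)\subseteq\mathsf{D}(C)$, and constants $c_A,c_D,L\ge0$ with $\|Cx\|_{X_2}\le c_A\|Ax\|_{X_1}+L\|x\|_{X_1}$ ($x\in\mathsf{D}(A)$), $\|By\|_{X_1}\le c_D\|Dy\|_{X_2}+L\|y\|_{X_2}$ ($y\in\mathsf{D}(D)$). $X=X_1\times X_2$, $\mathcal{A}=\begin{bmatrix}A&B\\C&D\end{bmatrix}$, $\mathcal{D}=\begin{bmatrix}A&0\\0&D\end{bmatrix}$, both with domain $\mathsf{D}(A)\times\mathsf{D}(D)$. For $\lambda\in\rho(A)\cap\rho(D)$: $M_1(\lambda)=I-B(\lambda-D)^{-1}C(\lambda-A)^{-1}\in\mathscr{L}(X_1)$ and $M_2(\lambda)=I-C(\lambda-A)^{-1}B(\lambda-D)^{-1}\in\mathscr{L}(X_2)$. *)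

theory Defs
  imports "HOL-Analysis.Analysis"
begin

class complex_vector = real_vector +
  fixes cscale :: "complex \<Rightarrow> 'a \<Rightarrow> 'a"
  assumes cscale_add_right: "cscale a (x + y) = cscale a x + cscale a y"
    and cscale_add_left: "cscale (a + b) x = cscale a x + cscale b x"
    and cscale_cscale: "cscale a (cscale b x) = cscale (a * b) x"
    and cscale_one: "cscale 1 x = x"
    and scaleR_cscale: "scaleR r x = cscale (complex_of_real r) x"

class complex_normed_vector = complex_vector + real_normed_vector +
  assumes norm_cscale: "norm (cscale a x) = cmod a * norm x"

instantiation complex :: complex_normed_vector
begin
definition cscale_complex :: "complex \<Rightarrow> complex \<Rightarrow> complex" where
  "cscale_complex a x = a * x"
instance
  by standard (auto simp: cscale_complex_def algebra_simps norm_mult scaleR_conv_of_real)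
end

instantiation prod :: (complex_vector, complex_vector) complex_vector
begin
definition cscale_prod :: "complex \<Rightarrow> 'a \<times> 'b \<Rightarrow> 'a \<times> 'b" where
  "cscale_prod a z = (cscale a (fst z), cscale a (snd z))"
instance
  by standard (auto simp: cscale_prod_def cscale_add_right cscale_add_left
      cscale_cscale cscale_one scaleR_prod_def scaleR_cscale)
end

instance prod :: (complex_normed_vector, complex_normed_vector) complex_normed_vector
proof
  fix a :: complex and x :: "'a \<times> 'b"
  show "norm (cscale a x) = cmod a * norm x"
    by (simp add: cscale_prod_def norm_prod_def norm_cscale power_mult_distrib
        distrib_left[symmetric] real_sqrt_mult)
qed

definition clinear_on :: "'a::complex_vector set \<Rightarrow> ('a \<Rightarrow> 'b::complex_vector) \<Rightarrow> bool" where
  "clinear_on DT T \<longleftrightarrow> 0 \<in> DT \<and>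
     (\<forall>x\<in>DT. \<forall>y\<in>DT. x + y \<in> DT \<and> T (x + y) = T x + T y) \<and>
     (\<forall>c. \<forall>x\<in>DT. cscale c x \<in> DT \<and> T (cscale c x) = cscale c (T x))"

definition bounded_clinear :: "('a::complex_normed_vector \<Rightarrow> 'b::complex_normed_vector) \<Rightarrow> bool" where
  "bounded_clinear f \<longleftrightarrow> bounded_linear f \<and> (\<forall>c x. f (cscale c x) = cscale c (f x))"

definition closed_op :: "'a::complex_normed_vector set \<Rightarrow> ('a \<Rightarrow> 'b::complex_normed_vector) \<Rightarrow> bool" where
  "closed_op DT T \<longleftrightarrow> closed {(x, T x) | x. x \<in> DT}"

definition resolvent :: "'a::complex_normed_vector set \<Rightarrow> ('a \<Rightarrow> 'a) \<Rightarrow> complex \<Rightarrow> 'a \<Rightarrow> 'a" where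
  "resolvent DT T l = inv_into DT (\<lambda>x. cscale l x - T x)"

definition resolvent_set :: "'a::complex_normed_vector set \<Rightarrow> ('a \<Rightarrow> 'a) \<Rightarrow> complex set" where
  "resolvent_set DT T = {l. bij_betw (\<lambda>x. cscale l x - T x) DT UNIV \<and>
                            bounded_clinear (resolvent DT T l)}"

definition sector :: "real \<Rightarrow> complex set" where
  "sector \<psi> = {z. z \<noteq> 0 \<and> \<bar>Arg z\<bar> < \<psi>}"

definition sect_cond :: "'a::complex_normed_vector set \<Rightarrow> ('a \<Rightarrow> 'a) \<Rightarrow> real \<Rightarrow> bool" where
  "sect_cond DT T \<omega> \<longleftrightarrow> 0 < \<omega> \<and> \<omega> < pi \<and>
     - closure (sector \<omega>) \<subseteq> resolvent_set DT T \<and>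
     (\<exists>K. \<forall>l \<in> - closure (sector \<omega>). onorm (\<lambda>x. cscale l (resolvent DT T l x)) \<le> K)"

definition sectorial :: "'a::complex_normed_vector set \<Rightarrow> ('a \<Rightarrow> 'a) \<Rightarrow> bool" where
  "sectorial DT T \<longleftrightarrow> clinear_on DT T \<and> closure DT = UNIV \<and> closure (T ` DT) = UNIV \<and>
     (\<exists>\<omega>. sect_cond DT T \<omega>)"

definition sect_angle :: "'a::complex_normed_vector set \<Rightarrow> ('a \<Rightarrow> 'a) \<Rightarrow> real" where
  "sect_angle DT T = Inf {\<omega>. sect_cond DT T \<omega>}"

definition sectorial_of_angle :: "'a::complex_normed_vector set \<Rightarrow> ('a \<Rightarrow> 'a) \<Rightarrow> real \<Rightarrow> bool" where
  "sectorial_of_angle DT T \<psi> \<longleftrightarrow> sectorial DT T \<and> sect_angle DT T \<le> \<psi>"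

text \<open>Rademacher average E || sum_{n<m} eps_n x_n ||^2, the expectation over independent
  symmetric signs written as the average over all sign vectors.\<close>
definition rad_avg :: "nat \<Rightarrow> (nat \<Rightarrow> 'a::real_normed_vector) \<Rightarrow> real" where
  "rad_avg m x = (\<Sum>\<epsilon> \<in> PiE {..<m} (\<lambda>_. {-1, 1::real}). (norm (\<Sum>n<m. \<epsilon> n *\<^sub>R x n))\<^sup>2) / 2 ^ m"

definition R_bounded :: "('a::complex_normed_vector \<Rightarrow> 'b::complex_normed_vector) set \<Rightarrow> bool" where
  "R_bounded J \<longleftrightarrow> (\<forall>T\<in>J. bounded_clinear T) \<and>
     (\<exists>K. \<forall>m Ts xs. (\<forall>n<m. Ts n \<in> J) \<longrightarrow>
            rad_avg m (\<lambda>n. Ts n (xs n)) \<le> K\<^sup>2 * rad_avg m xs)"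

definition R_sect_cond :: "'a::complex_normed_vector set \<Rightarrow> ('a \<Rightarrow> 'a) \<Rightarrow> real \<Rightarrow> bool" where
  "R_sect_cond DT T \<sigma> \<longleftrightarrow> sect_angle DT T < \<sigma> \<and> \<sigma> < pi \<and>
     R_bounded {(\<lambda>x. cscale l (resolvent DT T l x)) | l. l \<in> - closure (sector \<sigma>)}"

definition R_sectorial :: "'a::complex_normed_vector set \<Rightarrow> ('a \<Rightarrow> 'a) \<Rightarrow> bool" where
  "R_sectorial DT T \<longleftrightarrow> sectorial DT T \<and> (\<exists>\<sigma>. R_sect_cond DT T \<sigma>)"

definition R_angle :: "'a::complex_normed_vector set \<Rightarrow> ('a \<Rightarrow> 'a) \<Rightarrow> real" where
  "R_angle DT T = Inf {\<sigma>. R_sect_cond DT T \<sigma>}"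

definition R_sectorial_of_angle :: "'a::complex_normed_vector set \<Rightarrow> ('a \<Rightarrow> 'a) \<Rightarrow> real \<Rightarrow> bool" where
  "R_sectorial_of_angle DT T \<psi> \<longleftrightarrow> R_sectorial DT T \<and> R_angle DT T \<le> \<psi>"

text \<open>X is reflexive: the canonical embedding of X into its bidual X'' is onto, i.e. every
  bounded linear functional Phi on the dual X' is evaluation at some x.\<close>
definition reflexive_space :: "'a::complex_normed_vector itself \<Rightarrow> bool" where
  "reflexive_space (_::'a itself) \<longleftrightarrow>
     (\<forall>\<Phi> :: ('a \<Rightarrow> complex) \<Rightarrow> complex.
        ((\<forall>f g. bounded_clinear f \<longrightarrow> bounded_clinear g \<longrightarrow> \<Phi> (\<lambda>x. f x + g x) = \<Phi> f + \<Phi> g) \<and>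
         (\<forall>c f. bounded_clinear f \<longrightarrow> \<Phi> (\<lambda>x. c * f x) = c * \<Phi> f) \<and>
         (\<exists>K. \<forall>f. bounded_clinear f \<longrightarrow> cmod (\<Phi> f) \<le> K * onorm f))
        \<longrightarrow> (\<exists>x. \<forall>f. bounded_clinear f \<longrightarrow> \<Phi> f = f x))"

definition block_op :: "('a \<Rightarrow> 'a) \<Rightarrow> ('b \<Rightarrow> 'a::plus) \<Rightarrow> ('a \<Rightarrow> 'b) \<Rightarrow> ('b \<Rightarrow> 'b::plus)
                        \<Rightarrow> 'a \<times> 'b \<Rightarrow> 'a \<times> 'b" where
  "block_op A B C D z = (A (fst z) + B (snd z), C (fst z) + D (snd z))"

definition M1 :: "'a::complex_normed_vector set \<Rightarrow> ('a \<Rightarrow> 'a) \<Rightarrow> ('b \<Rightarrow> 'a) \<Rightarrow> ('a \<Rightarrow> 'b)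
                  \<Rightarrow> 'b::complex_normed_vector set \<Rightarrow> ('b \<Rightarrow> 'b) \<Rightarrow> complex \<Rightarrow> 'a \<Rightarrow> 'a" where
  "M1 DA A B C DD D l = (\<lambda>x. x - B (resolvent DD D l (C (resolvent DA A l x))))"

definition M2 :: "'a::complex_normed_vector set \<Rightarrow> ('a \<Rightarrow> 'a) \<Rightarrow> ('b \<Rightarrow> 'a) \<Rightarrow> ('a \<Rightarrow> 'b)
                  \<Rightarrow> 'b::complex_normed_vector set \<Rightarrow> ('b \<Rightarrow> 'b) \<Rightarrow> complex \<Rightarrow> 'b \<Rightarrow> 'b" where
  "M2 DA A B C DD D l = (\<lambda>y. y - C (resolvent DA A l (B (resolvent DD D l y))))"

definition invertible_bdd :: "('a::complex_normed_vector \<Rightarrow> 'a) \<Rightarrow> bool" where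
  "invertible_bdd f \<longleftrightarrow> bij f \<and> bounded_clinear (inv f)"

definition M_cond :: "real \<Rightarrow> (complex \<Rightarrow> 'a::complex_normed_vector \<Rightarrow> 'a) \<Rightarrow> bool" where
  "M_cond \<psi> M \<longleftrightarrow> (\<forall>\<phi>. \<psi> < \<phi> \<and> \<phi> < pi \<longrightarrow>
     (\<forall>l \<in> - closure (sector \<phi>). invertible_bdd (M l)) \<and>
     (\<exists>K. \<forall>l \<in> - closure (sector \<phi>). onorm (inv (M l)) \<le> K))"

definition M_R_cond :: "real \<Rightarrow> (complex \<Rightarrow> 'a::complex_normed_vector \<Rightarrow> 'a) \<Rightarrow> bool" where
  "M_R_cond \<psi> M \<longleftrightarrow> (\<forall>\<phi>. \<psi> < \<phi> \<and> \<phi> < pi \<longrightarrow>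
     (\<forall>l \<in> - closure (sector \<phi>). invertible_bdd (M l)) \<and>
     R_bounded {inv (M l) | l. l \<in> - closure (sector \<phi>)})"

end

theory Submission
  imports Defs
begin

text \<open>
  For \<open>\<lambda> \<in> \<rho>(A) \<inter> \<rho>(D)\<close>, the operator \<open>\<lambda> - \<A>\<close> is inverted through the Schur complement
  \<open>M\<^sub>1(\<lambda>) = I - B R(\<lambda>,D) C R(\<lambda>,A)\<close>: \<open>\<lambda> \<in> \<rho>(\<A>)\<close> iff \<open>M\<^sub>1(\<lambda>)\<close> is invertible, and \<open>\<lambda> R(\<lambda>,\<A>)\<close> and
  \<open>M\<^sub>1(\<lambda>)\<^sup>-\<^sup>1\<close> are explicit expressions in each other, \<open>\<lambda> R(\<lambda>,A)\<close>, \<open>\<lambda> R(\<lambda>,D)\<close>, \<open>B R(\<lambda>,D)\<close> and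
  \<open>C R(\<lambda>,A)\<close>.  The relative bounds make \<open>B R(\<lambda>,D)\<close> and \<open>C R(\<lambda>,A)\<close> uniformly (resp. \<open>\<R>\<close>-) bounded
  on sectors, and the diagonal bound \<open>\<parallel>\<D> z\<parallel> \<lesssim> \<parallel>\<A> z\<parallel>\<close> controls \<open>\<lambda> - A\<close> applied to the first
  component of \<open>R(\<lambda>,\<A>) (x, 0)\<close>, which is \<open>R(\<lambda>,A) M\<^sub>1(\<lambda>)\<^sup>-\<^sup>1 x\<close>.  Sums, compositions and pairs of
  uniformly (resp. \<open>\<R>\<close>-) bounded families are again such, so the bounds transfer in both
  directions; \<open>(I - X Y)\<^sup>-\<^sup>1 = I + X (I - Y X)\<^sup>-\<^sup>1 Y\<close> passes from \<open>M\<^sub>2\<close> to \<open>M\<^sub>1\<close>.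

  On a reflexive space the range condition is automatic: \<open>\<A>\<close> is injective, since \<open>\<A> z = 0\<close>
  forces \<open>\<D> z = 0\<close>, and an injective sectorial operator on a reflexive space has dense range.
\<close>

section \<open>Complex-linear operators\<close>

lemma cscale_zero_right [simp]: "cscale c (0::'a::complex_vector) = 0"
  by (metis add_cancel_right_right cscale_add_right)

lemma cscale_zero_left [simp]: "cscale 0 (x::'a::complex_vector) = 0"
  by (metis scaleR_cscale scaleR_zero_left of_real_0)

lemma cscale_minus_right: "cscale c (- (x::'a::complex_vector)) = - cscale c x"
  by (metis add_eq_0_iff cscale_add_right cscale_zero_right)

lemma cscale_diff_right: "cscale c ((x::'a::complex_vector) - y) = cscale c x - cscale c y"
  by (metis cscale_add_right cscale_minus_right diff_conv_add_uminus)

lemma cscale_scaleR: "cscale c (r *\<^sub>R (x::'a::complex_vector)) = r *\<^sub>R cscale c x"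
  by (simp add: scaleR_cscale cscale_cscale mult.commute)

lemma bounded_linear_cscale: "bounded_linear (cscale c :: 'a::complex_normed_vector \<Rightarrow> 'a)"
  by (rule bounded_linear_intro[where K="cmod c"])
     (auto simp: cscale_add_right cscale_scaleR norm_cscale mult.commute)

lemma bounded_clinear_intro:
  fixes f :: "'a::complex_normed_vector \<Rightarrow> 'b::complex_normed_vector"
  assumes "\<And>x y. f (x + y) = f x + f y" "\<And>c x. f (cscale c x) = cscale c (f x)"
    and "\<And>x. norm (f x) \<le> K * norm x"
  shows "bounded_clinear f"
  unfolding bounded_clinear_def
proof (intro conjI allI)
  show "bounded_linear f"
    by (rule bounded_linear_intro[where K=K]) (auto simp: assms scaleR_cscale mult.commute)
qed (use assms in auto)

lemma bounded_clinear_imp_bounded_linear: "bounded_clinear f \<Longrightarrow> bounded_linear f"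
  by (simp add: bounded_clinear_def)

lemma bounded_clinear_cscale: "bounded_clinear f \<Longrightarrow> f (cscale c x) = cscale c (f x)"
  by (simp add: bounded_clinear_def)

lemma bounded_clinear_add: "bounded_clinear f \<Longrightarrow> f (x + y) = f x + f y"
  by (simp add: bounded_clinear_def linear_simps)

lemma bounded_clinear_diff: "bounded_clinear f \<Longrightarrow> f (x - y) = f x - f y"
  by (simp add: bounded_clinear_def linear_simps)

lemma bounded_clinear_zero: "bounded_clinear f \<Longrightarrow> f 0 = 0"
  by (simp add: bounded_clinear_def linear_simps)

lemma bounded_clinear_norm: "bounded_clinear f \<Longrightarrow> norm (f x) \<le> onorm f * norm x"
  by (simp add: bounded_clinear_def onorm)

lemma bounded_clinear_onorm_nonneg: "bounded_clinear f \<Longrightarrow> 0 \<le> onorm f"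
  by (simp add: bounded_clinear_def onorm_pos_le)

lemma bounded_clinear_compose:
  "bounded_clinear f \<Longrightarrow> bounded_clinear g \<Longrightarrow> bounded_clinear (\<lambda>x. f (g x))"
  unfolding bounded_clinear_def using bounded_linear_compose by auto

lemma bounded_clinear_ident: "bounded_clinear (\<lambda>x. x)"
  unfolding bounded_clinear_def by (simp add: bounded_linear_ident)

lemma bounded_clinear_plus:
  "bounded_clinear f \<Longrightarrow> bounded_clinear g \<Longrightarrow> bounded_clinear (\<lambda>x. f x + g x)"
  unfolding bounded_clinear_def using bounded_linear_add by (auto simp: cscale_add_right)

lemma bounded_clinear_minus:
  "bounded_clinear f \<Longrightarrow> bounded_clinear g \<Longrightarrow> bounded_clinear (\<lambda>x. f x - g x)"
  unfolding bounded_clinear_def using bounded_linear_sub by (auto simp: cscale_diff_right)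

lemma bounded_clinear_cscale_left: "bounded_clinear f \<Longrightarrow> bounded_clinear (\<lambda>x. cscale c (f x))"
  unfolding bounded_clinear_def
  using bounded_linear_compose[OF bounded_linear_cscale[of c]]
  by (auto simp: cscale_cscale mult.commute)

lemma bounded_clinear_fst: "bounded_clinear fst"
  unfolding bounded_clinear_def by (simp add: bounded_linear_fst cscale_prod_def)

lemma bounded_clinear_snd: "bounded_clinear snd"
  unfolding bounded_clinear_def by (simp add: bounded_linear_snd cscale_prod_def)

lemma bounded_clinear_Pair:
  "bounded_clinear f \<Longrightarrow> bounded_clinear g \<Longrightarrow> bounded_clinear (\<lambda>x. (f x, g x))"
  unfolding bounded_clinear_def by (simp add: bounded_linear_Pair cscale_prod_def)

lemma bounded_clinear_Pair_zero: "bounded_clinear (\<lambda>x. (x, 0))"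
  by (intro bounded_clinear_Pair bounded_clinear_ident) (simp add: bounded_clinear_def)

lemma invertible_bddI:
  assumes "bounded_clinear g" "\<And>x. f (g x) = x" "\<And>x. g (f x) = x"
  shows "invertible_bdd f" "inv f = g"
proof -
  have "f \<circ> g = id" "g \<circ> f = id" using assms by (auto simp: fun_eq_iff)
  then have "bij f" "inv f = g" by (auto intro: o_bij inv_unique_comp)
  then show "invertible_bdd f" "inv f = g"
    using assms(1) by (simp_all add: invertible_bdd_def)
qed

lemma invertible_bddD:
  assumes "invertible_bdd f"
  shows "f (inv f x) = x" "inv f (f x) = x" "bounded_clinear (inv f)"
  using assms by (auto simp: invertible_bdd_def bij_is_surj surj_f_inv_f bij_is_inj inv_f_f)

context
  fixes DT :: "'a::complex_vector set" and T :: "'a \<Rightarrow> 'b::complex_vector"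
  assumes lin: "clinear_on DT T"
begin

lemma clinear_on_zero_mem: "0 \<in> DT"
  using lin by (simp add: clinear_on_def)

lemma clinear_on_add_mem: "x \<in> DT \<Longrightarrow> y \<in> DT \<Longrightarrow> x + y \<in> DT"
  using lin by (simp add: clinear_on_def)

lemma clinear_on_add: "x \<in> DT \<Longrightarrow> y \<in> DT \<Longrightarrow> T (x + y) = T x + T y"
  using lin by (simp add: clinear_on_def)

lemma clinear_on_cscale_mem: "x \<in> DT \<Longrightarrow> cscale c x \<in> DT"
  using lin by (simp add: clinear_on_def)

lemma clinear_on_cscale: "x \<in> DT \<Longrightarrow> T (cscale c x) = cscale c (T x)"
  using lin by (simp add: clinear_on_def)

lemma clinear_on_zero: "T 0 = 0"
  using clinear_on_cscale[OF clinear_on_zero_mem, of 0] by simp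

lemma clinear_on_scaleR_sum:
  assumes "\<forall>n<m. x n \<in> DT"
  shows "(\<Sum>n<m. e n *\<^sub>R x n) \<in> DT" "T (\<Sum>n<m. e n *\<^sub>R x n) = (\<Sum>n<m. e n *\<^sub>R T (x n))"
proof -
  have "(\<Sum>n\<in>I. e n *\<^sub>R x n) \<in> DT \<and> T (\<Sum>n\<in>I. e n *\<^sub>R x n) = (\<Sum>n\<in>I. e n *\<^sub>R T (x n))"
    if "I \<subseteq> {..<m}" for I
    using that assms
    by (induction I rule: infinite_finite_induct)
      (auto simp: clinear_on_zero_mem clinear_on_zero clinear_on_add_mem clinear_on_add
        scaleR_cscale clinear_on_cscale_mem clinear_on_cscale)
  then show "(\<Sum>n<m. e n *\<^sub>R x n) \<in> DT" "T (\<Sum>n<m. e n *\<^sub>R x n) = (\<Sum>n<m. e n *\<^sub>R T (x n))"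
    by blast+
qed

end

lemma clinear_on_block_op:
  assumes A: "clinear_on DA A" and D: "clinear_on DD D"
    and B: "clinear_on DB B" "DD \<subseteq> DB" and C: "clinear_on DC C" "DA \<subseteq> DC"
  shows "clinear_on (DA \<times> DD) (block_op A B C D)"
  unfolding clinear_on_def block_op_def
proof (intro conjI ballI allI)
  show "0 \<in> DA \<times> DD"
    using clinear_on_zero_mem[OF A] clinear_on_zero_mem[OF D] by (simp add: zero_prod_def)
next
  fix x y assume "x \<in> DA \<times> DD" "y \<in> DA \<times> DD"
  then have x: "fst x \<in> DA" "snd x \<in> DD" "fst x \<in> DC" "snd x \<in> DB"
    and y: "fst y \<in> DA" "snd y \<in> DD" "fst y \<in> DC" "snd y \<in> DB"
    using B(2) C(2) by auto
  show "x + y \<in> DA \<times> DD"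
    using x y clinear_on_add_mem[OF A] clinear_on_add_mem[OF D] by (simp add: mem_Times_iff)
  show "(A (fst (x + y)) + B (snd (x + y)), C (fst (x + y)) + D (snd (x + y))) =
      (A (fst x) + B (snd x), C (fst x) + D (snd x)) + (A (fst y) + B (snd y), C (fst y) + D (snd y))"
    using x y by (simp add: clinear_on_add[OF A] clinear_on_add[OF D] clinear_on_add[OF B(1)]
        clinear_on_add[OF C(1)])
next
  fix c x assume "x \<in> DA \<times> DD"
  then have x: "fst x \<in> DA" "snd x \<in> DD" "fst x \<in> DC" "snd x \<in> DB"
    using B(2) C(2) by auto
  show "cscale c x \<in> DA \<times> DD"
    using x clinear_on_cscale_mem[OF A] clinear_on_cscale_mem[OF D]
    by (simp add: cscale_prod_def mem_Times_iff)
  show "(A (fst (cscale c x)) + B (snd (cscale c x)), C (fst (cscale c x)) + D (snd (cscale c x))) =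
      cscale c (A (fst x) + B (snd x), C (fst x) + D (snd x))"
    using x by (simp add: cscale_prod_def clinear_on_cscale[OF A] clinear_on_cscale[OF D]
        clinear_on_cscale[OF B(1)] clinear_on_cscale[OF C(1)] cscale_add_right)
qed

section \<open>Resolvents and sectors\<close>

context
  fixes DT :: "'a::complex_normed_vector set" and T :: "'a \<Rightarrow> 'a" and l :: complex
  assumes l: "l \<in> resolvent_set DT T"
begin

lemma resolvent_bounded_clinear: "bounded_clinear (resolvent DT T l)"
  using l by (simp add: resolvent_set_def)

lemma resolvent_mem: "resolvent DT T l x \<in> DT"
  using l unfolding resolvent_set_def resolvent_def bij_betw_def by (auto intro: inv_into_into)

lemma resolvent_right_inverse: "cscale l (resolvent DT T l x) - T (resolvent DT T l x) = x"
  using l unfolding resolvent_set_def resolvent_def bij_betw_def by (auto intro: f_inv_into_f)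

lemma resolvent_left_inverse: "u \<in> DT \<Longrightarrow> resolvent DT T l (cscale l u - T u) = u"
  using l unfolding resolvent_set_def resolvent_def bij_betw_def by (auto intro: inv_into_f_f)

lemma apply_resolvent: "T (resolvent DT T l x) = cscale l (resolvent DT T l x) - x"
  using resolvent_right_inverse[of x] by (simp add: algebra_simps)

lemma scaled_resolvent_bounded_clinear: "bounded_clinear (\<lambda>x. cscale l (resolvent DT T l x))"
  by (rule bounded_clinear_cscale_left[OF resolvent_bounded_clinear])

lemma resolvent_commute:
  assumes "u \<in> DT"
  shows "resolvent DT T l (T u) = T (resolvent DT T l u)"
proof -
  note R = resolvent_bounded_clinear
  have "cscale l (resolvent DT T l u) - resolvent DT T l (T u) = u"
    using resolvent_left_inverse[OF assms]
    by (simp add: bounded_clinear_diff[OF R] bounded_clinear_cscale[OF R])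
  then show ?thesis by (simp add: apply_resolvent algebra_simps)
qed

end

lemma resolvent_eqI:
  assumes "inj_on (\<lambda>x. cscale l x - T x) DT" "u \<in> DT" "cscale l u - T u = x"
  shows "resolvent DT T l x = u"
  unfolding resolvent_def using assms by (auto intro: inv_into_f_eq)

abbreviation sector_compl :: "real \<Rightarrow> complex set" where
  "sector_compl \<phi> \<equiv> - closure (sector \<phi>)"

lemma sector_compl_antimono:
  assumes "\<omega> \<le> \<phi>"
  shows "sector_compl \<phi> \<subseteq> sector_compl \<omega>"
proof -
  have "sector \<omega> \<subseteq> sector \<phi>" using assms by (auto simp: sector_def)
  then show ?thesis using closure_mono by blast
qed

lemma closure_sector_subset: "\<phi> \<le> pi \<Longrightarrow> closure (sector \<phi>) \<subseteq> {z. cos \<phi> * cmod z \<le> Re z}"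
proof (rule closure_minimal)
  assume \<phi>: "\<phi> \<le> pi"
  show "sector \<phi> \<subseteq> {z. cos \<phi> * cmod z \<le> Re z}"
  proof
    fix z assume "z \<in> sector \<phi>"
    then have z: "z \<noteq> 0" "\<bar>Arg z\<bar> < \<phi>" by (auto simp: sector_def)
    have "cos \<phi> \<le> cos \<bar>Arg z\<bar>" using z \<phi> by (intro cos_monotone_0_pi_le) auto
    moreover have "Re z = cos \<bar>Arg z\<bar> * cmod z"
      using cos_Arg[OF z(1)] z(1) by (simp add: abs_if mult.commute)
    ultimately show "z \<in> {z. cos \<phi> * cmod z \<le> Re z}" by (simp add: mult_right_mono)
  qed
  show "closed {z. cos \<phi> * cmod z \<le> Re z}"
    by (intro closed_Collect_le continuous_intros)
qed

lemma negative_real_in_sector_compl: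
  assumes "t > 0" "\<phi> < pi"
  shows "complex_of_real (- t) \<in> sector_compl \<phi>"
proof (cases "\<phi> > 0")
  case True
  have "-1 < cos \<phi>" using True assms(2) cos_monotone_0_pi[of \<phi> pi] by simp
  then have "\<not> cos \<phi> * t \<le> - t" using mult_strict_right_mono[of "-1" "cos \<phi>" t] assms(1) by simp
  then show ?thesis using closure_sector_subset[of \<phi>] assms by auto
next
  case False
  then have "sector \<phi> = {}" by (auto simp: sector_def)
  then show ?thesis by simp
qed

section \<open>Rademacher bounds of operator families\<close>

text \<open>\<open>Q\<close> restricts the index sequences on which the Rademacher estimate is tested.  Admitting
  all sequences gives \<open>\<R>\<close>-boundedness, admitting only constant ones a uniform operator-norm
  bound (\<open>rad_bounded_constant_indices_iff\<close>); so uniform bounds and \<open>\<R>\<close>-bounds obey one calculus.\<close>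

definition rad_bounded :: "(nat \<Rightarrow> (nat \<Rightarrow> 'i) \<Rightarrow> bool) \<Rightarrow> 'i set \<Rightarrow>
    ('i \<Rightarrow> 'x::real_normed_vector \<Rightarrow> 'y::real_normed_vector) \<Rightarrow> bool" where
  "rad_bounded Q I F \<longleftrightarrow> (\<exists>K. \<forall>m ls xs. Q m ls \<longrightarrow> (\<forall>n<m. ls n \<in> I) \<longrightarrow>
      rad_avg m (\<lambda>n. F (ls n) (xs n)) \<le> K\<^sup>2 * rad_avg m xs)"

definition constant_indices :: "nat \<Rightarrow> (nat \<Rightarrow> 'i) \<Rightarrow> bool" where
  "constant_indices m ls \<longleftrightarrow> (\<forall>n<m. ls n = ls 0)"

lemma rad_boundedI:
  assumes "\<And>m ls xs. Q m ls \<Longrightarrow> \<forall>n<m. ls n \<in> I \<Longrightarrow>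
      rad_avg m (\<lambda>n. F (ls n) (xs n)) \<le> K\<^sup>2 * rad_avg m xs"
  shows "rad_bounded Q I F"
  using assms unfolding rad_bounded_def by blast

lemma rad_avg_cong: "(\<And>n. n < m \<Longrightarrow> y n = z n) \<Longrightarrow> rad_avg m y = rad_avg m z"
  unfolding rad_avg_def by (intro arg_cong2[where f="(/)"] sum.cong refl) auto

lemma rad_avg_le_scaled:
  assumes "\<And>\<epsilon>. norm (\<Sum>n<m. \<epsilon> n *\<^sub>R y n) \<le> c * norm (\<Sum>n<m. \<epsilon> n *\<^sub>R z n)" "0 \<le> c"
  shows "rad_avg m y \<le> c\<^sup>2 * rad_avg m z"
proof -
  have "(\<Sum>\<epsilon> \<in> PiE {..<m} (\<lambda>_. {-1, 1::real}). (norm (\<Sum>n<m. \<epsilon> n *\<^sub>R y n))\<^sup>2)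
      \<le> (\<Sum>\<epsilon> \<in> PiE {..<m} (\<lambda>_. {-1, 1::real}). c\<^sup>2 * (norm (\<Sum>n<m. \<epsilon> n *\<^sub>R z n))\<^sup>2)"
    using power_mono[OF assms(1)] by (intro sum_mono) (simp add: power_mult_distrib)
  then show ?thesis
    unfolding rad_avg_def by (simp add: sum_distrib_left[symmetric] divide_right_mono)
qed

lemma rad_avg_add_le: "rad_avg m (\<lambda>n. y n + z n) \<le> 2 * rad_avg m y + 2 * rad_avg m z"
proof -
  have sq: "(norm (a + b))\<^sup>2 \<le> 2 * (norm a)\<^sup>2 + 2 * (norm b)\<^sup>2" for a b :: 'a
  proof -
    have "(norm (a + b))\<^sup>2 \<le> (norm a + norm b)\<^sup>2"
      using norm_triangle_ineq[of a b] by (simp add: power_mono)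
    also have "\<dots> \<le> 2 * (norm a)\<^sup>2 + 2 * (norm b)\<^sup>2"
      using zero_le_power2[of "norm a - norm b"] by (simp add: power2_sum power2_diff)
    finally show ?thesis .
  qed
  have "(\<Sum>\<epsilon> \<in> PiE {..<m} (\<lambda>_. {-1, 1::real}). (norm (\<Sum>n<m. \<epsilon> n *\<^sub>R (y n + z n)))\<^sup>2)
      \<le> (\<Sum>\<epsilon> \<in> PiE {..<m} (\<lambda>_. {-1, 1::real}). 2 * (norm (\<Sum>n<m. \<epsilon> n *\<^sub>R y n))\<^sup>2
             + 2 * (norm (\<Sum>n<m. \<epsilon> n *\<^sub>R z n))\<^sup>2)"
    using sq by (intro sum_mono) (simp add: scaleR_add_right sum.distrib)
  also have "\<dots> = 2 * (\<Sum>\<epsilon> \<in> PiE {..<m} (\<lambda>_. {-1, 1::real}). (norm (\<Sum>n<m. \<epsilon> n *\<^sub>R y n))\<^sup>2)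
      + 2 * (\<Sum>\<epsilon> \<in> PiE {..<m} (\<lambda>_. {-1, 1::real}). (norm (\<Sum>n<m. \<epsilon> n *\<^sub>R z n))\<^sup>2)"
    by (simp add: sum.distrib sum_distrib_left)
  finally show ?thesis
    unfolding rad_avg_def by (simp add: divide_right_mono add_divide_distrib[symmetric])
qed

lemma rad_avg_Pair: "rad_avg m (\<lambda>n. (y n, z n)) = rad_avg m y + rad_avg m z"
proof -
  have "(\<Sum>n<m. \<epsilon> n *\<^sub>R (y n, z n)) = ((\<Sum>n<m. \<epsilon> n *\<^sub>R y n), (\<Sum>n<m. \<epsilon> n *\<^sub>R z n))"
    for \<epsilon> :: "nat \<Rightarrow> real"
    by (simp add: prod_eq_iff fst_sum snd_sum)
  then show ?thesis
    unfolding rad_avg_def by (simp add: norm_Pair sum.distrib add_divide_distrib)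
qed

lemma rad_avg_one: "rad_avg 1 y = (norm (y 0))\<^sup>2"
proof -
  have "(norm (\<Sum>n<1. \<epsilon> n *\<^sub>R y n))\<^sup>2 = (norm (y 0))\<^sup>2"
    if "\<epsilon> \<in> PiE {..<1::nat} (\<lambda>_. {-1, 1::real})" for \<epsilon>
  proof -
    have "\<epsilon> 0 = -1 \<or> \<epsilon> 0 = 1" using that by (auto simp: PiE_iff)
    then show ?thesis by auto
  qed
  then have "(\<Sum>\<epsilon> \<in> PiE {..<1::nat} (\<lambda>_. {-1, 1::real}). (norm (\<Sum>n<1. \<epsilon> n *\<^sub>R y n))\<^sup>2)
      = (\<Sum>\<epsilon> \<in> PiE {..<1::nat} (\<lambda>_. {-1, 1::real}). (norm (y 0))\<^sup>2)"
    by (rule sum.cong[OF refl])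
  also have "\<dots> = 2 * (norm (y 0))\<^sup>2"
    by (simp add: card_PiE)
  finally show ?thesis
    unfolding rad_avg_def by simp
qed

lemma rad_bounded_dominated:
  assumes "\<And>m ls xs \<epsilon>. Q m ls \<Longrightarrow> \<forall>n<m. ls n \<in> I \<Longrightarrow>
      norm (\<Sum>n<m. \<epsilon> n *\<^sub>R F (ls n) (xs n)) \<le> c * norm (\<Sum>n<m. \<epsilon> n *\<^sub>R G (ls n) (xs n))"
    and "0 \<le> c" and "rad_bounded Q I G"
  shows "rad_bounded Q I F"
proof -
  obtain K where K: "\<And>m ls xs. Q m ls \<Longrightarrow> \<forall>n<m. ls n \<in> I \<Longrightarrow>
      rad_avg m (\<lambda>n. G (ls n) (xs n)) \<le> K\<^sup>2 * rad_avg m xs"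
    using assms(3) unfolding rad_bounded_def by blast
  show ?thesis
  proof (rule rad_boundedI[where K="c * K"])
    fix m ls xs assume ls: "Q m ls" "\<forall>n<m. ls n \<in> I"
    have "rad_avg m (\<lambda>n. F (ls n) (xs n)) \<le> c\<^sup>2 * rad_avg m (\<lambda>n. G (ls n) (xs n))"
      by (intro rad_avg_le_scaled assms(1)[OF ls] assms(2))
    also have "\<dots> \<le> c\<^sup>2 * (K\<^sup>2 * rad_avg m xs)"
      using K[OF ls] by (intro mult_left_mono) auto
    finally show "rad_avg m (\<lambda>n. F (ls n) (xs n)) \<le> (c * K)\<^sup>2 * rad_avg m xs"
      by (simp add: power_mult_distrib)
  qed
qed

lemma rad_bounded_add:
  assumes "rad_bounded Q I F" "rad_bounded Q I G"
  shows "rad_bounded Q I (\<lambda>l x. F l x + G l x)"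
proof -
  obtain K1 where K1: "\<And>m ls xs. Q m ls \<Longrightarrow> \<forall>n<m. ls n \<in> I \<Longrightarrow> rad_avg m (\<lambda>n. F (ls n) (xs n)) \<le> K1\<^sup>2 * rad_avg m xs"
    using assms(1) unfolding rad_bounded_def by blast
  obtain K2 where K2: "\<And>m ls xs. Q m ls \<Longrightarrow> \<forall>n<m. ls n \<in> I \<Longrightarrow> rad_avg m (\<lambda>n. G (ls n) (xs n)) \<le> K2\<^sup>2 * rad_avg m xs"
    using assms(2) unfolding rad_bounded_def by blast
  show ?thesis
  proof (rule rad_boundedI[where K="sqrt (2 * K1\<^sup>2 + 2 * K2\<^sup>2)"])
    fix m ls xs assume ls: "Q m ls" "\<forall>n<m. ls n \<in> I"
    have "rad_avg m (\<lambda>n. F (ls n) (xs n) + G (ls n) (xs n))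
        \<le> 2 * rad_avg m (\<lambda>n. F (ls n) (xs n)) + 2 * rad_avg m (\<lambda>n. G (ls n) (xs n))"
      by (rule rad_avg_add_le)
    also have "\<dots> \<le> 2 * (K1\<^sup>2 * rad_avg m xs) + 2 * (K2\<^sup>2 * rad_avg m xs)"
      using K1[OF ls] K2[OF ls] by (intro add_mono mult_left_mono) auto
    finally show "rad_avg m (\<lambda>n. F (ls n) (xs n) + G (ls n) (xs n))
        \<le> (sqrt (2 * K1\<^sup>2 + 2 * K2\<^sup>2))\<^sup>2 * rad_avg m xs"
      by (simp add: algebra_simps)
  qed
qed

lemma rad_bounded_compose:
  assumes "rad_bounded Q I F" "rad_bounded Q I G"
  shows "rad_bounded Q I (\<lambda>l x. F l (G l x))"
proof -
  obtain K1 where K1: "\<And>m ls xs. Q m ls \<Longrightarrow> \<forall>n<m. ls n \<in> I \<Longrightarrow> rad_avg m (\<lambda>n. F (ls n) (xs n)) \<le> K1\<^sup>2 * rad_avg m xs"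
    using assms(1) unfolding rad_bounded_def by blast
  obtain K2 where K2: "\<And>m ls xs. Q m ls \<Longrightarrow> \<forall>n<m. ls n \<in> I \<Longrightarrow> rad_avg m (\<lambda>n. G (ls n) (xs n)) \<le> K2\<^sup>2 * rad_avg m xs"
    using assms(2) unfolding rad_bounded_def by blast
  show ?thesis
  proof (rule rad_boundedI[where K="K1 * K2"])
    fix m ls xs assume ls: "Q m ls" "\<forall>n<m. ls n \<in> I"
    have "rad_avg m (\<lambda>n. F (ls n) (G (ls n) (xs n))) \<le> K1\<^sup>2 * rad_avg m (\<lambda>n. G (ls n) (xs n))"
      by (rule K1[OF ls])
    also have "\<dots> \<le> K1\<^sup>2 * (K2\<^sup>2 * rad_avg m xs)"
      using K2[OF ls] by (intro mult_left_mono) auto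
    finally show "rad_avg m (\<lambda>n. F (ls n) (G (ls n) (xs n))) \<le> (K1 * K2)\<^sup>2 * rad_avg m xs"
      by (simp add: power_mult_distrib)
  qed
qed

lemma rad_bounded_Pair:
  assumes "rad_bounded Q I F" "rad_bounded Q I G"
  shows "rad_bounded Q I (\<lambda>l x. (F l x, G l x))"
proof -
  obtain K1 where K1: "\<And>m ls xs. Q m ls \<Longrightarrow> \<forall>n<m. ls n \<in> I \<Longrightarrow> rad_avg m (\<lambda>n. F (ls n) (xs n)) \<le> K1\<^sup>2 * rad_avg m xs"
    using assms(1) unfolding rad_bounded_def by blast
  obtain K2 where K2: "\<And>m ls xs. Q m ls \<Longrightarrow> \<forall>n<m. ls n \<in> I \<Longrightarrow> rad_avg m (\<lambda>n. G (ls n) (xs n)) \<le> K2\<^sup>2 * rad_avg m xs"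
    using assms(2) unfolding rad_bounded_def by blast
  show ?thesis
  proof (rule rad_boundedI[where K="sqrt (K1\<^sup>2 + K2\<^sup>2)"])
    fix m ls xs assume ls: "Q m ls" "\<forall>n<m. ls n \<in> I"
    have "rad_avg m (\<lambda>n. (F (ls n) (xs n), G (ls n) (xs n))) \<le> K1\<^sup>2 * rad_avg m xs + K2\<^sup>2 * rad_avg m xs"
      unfolding rad_avg_Pair by (intro add_mono K1[OF ls] K2[OF ls])
    then show "rad_avg m (\<lambda>n. (F (ls n) (xs n), G (ls n) (xs n))) \<le> (sqrt (K1\<^sup>2 + K2\<^sup>2))\<^sup>2 * rad_avg m xs"
      by (simp add: algebra_simps)
  qed
qed

lemma rad_bounded_id: "rad_bounded Q I (\<lambda>l x. x)"
  by (rule rad_boundedI[where K=1]) simp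

lemma rad_bounded_const:
  assumes "bounded_linear T"
  shows "rad_bounded Q I (\<lambda>l. T)"
proof (rule rad_bounded_dominated[OF _ onorm_pos_le[OF assms] rad_bounded_id])
  fix m ls xs \<epsilon>
  have "(\<Sum>n<m. \<epsilon> n *\<^sub>R T (xs n)) = T (\<Sum>n<m. \<epsilon> n *\<^sub>R xs n)"
    using assms by (simp add: linear_sum[OF bounded_linear.linear] linear_scale[OF bounded_linear.linear])
  then show "norm (\<Sum>n<m. \<epsilon> n *\<^sub>R T (xs n)) \<le> onorm T * norm (\<Sum>n<m. \<epsilon> n *\<^sub>R xs n)"
    using onorm[OF assms] by simp
qed

lemma rad_bounded_diff:
  assumes "rad_bounded Q I F" "rad_bounded Q I G"
  shows "rad_bounded Q I (\<lambda>l x. F l x - G l x)"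
proof -
  have "rad_bounded Q I (\<lambda>l x. - G l x)"
    using rad_bounded_compose[OF rad_bounded_const assms(2)] bounded_linear_minus[OF bounded_linear_ident]
    by blast
  from rad_bounded_add[OF assms(1) this] show ?thesis by simp
qed

lemma rad_bounded_cong:
  assumes "\<And>l x. l \<in> I \<Longrightarrow> F l x = G l x" "rad_bounded Q I F"
  shows "rad_bounded Q I G"
proof -
  have "rad_avg m (\<lambda>n. G (ls n) (xs n)) = rad_avg m (\<lambda>n. F (ls n) (xs n))"
    if "\<forall>n<m. ls n \<in> I" for m ls xs
    using assms(1) that by (intro rad_avg_cong) auto
  with assms(2) show ?thesis
    unfolding rad_bounded_def by metis
qed

lemma rad_bounded_mono:
  assumes "rad_bounded Q I F" "J \<subseteq> I" "\<And>m ls. Q' m ls \<Longrightarrow> Q m ls"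
  shows "rad_bounded Q' J F"
  using assms unfolding rad_bounded_def by (meson subsetD)

lemma rad_bounded_all_indices_imp: "rad_bounded (\<lambda>_ _. True) I F \<Longrightarrow> rad_bounded Q I F"
  by (rule rad_bounded_mono) auto

lemma rad_bounded_constant_indices_imp_bound:
  assumes "rad_bounded constant_indices I F"
  obtains K where "\<And>l x. l \<in> I \<Longrightarrow> norm (F l x) \<le> K * norm x"
proof -
  obtain K where K: "\<And>m ls xs. constant_indices m ls \<Longrightarrow> \<forall>n<m. ls n \<in> I \<Longrightarrow>
      rad_avg m (\<lambda>n. F (ls n) (xs n)) \<le> K\<^sup>2 * rad_avg m xs"
    using assms unfolding rad_bounded_def by blast
  have "norm (F l x) \<le> \<bar>K\<bar> * norm x" if "l \<in> I" for l x
  proof -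
    have "(norm (F l x))\<^sup>2 \<le> (\<bar>K\<bar> * norm x)\<^sup>2"
      using K[of 1 "\<lambda>_. l" "\<lambda>_. x"] that unfolding rad_avg_one
      by (simp add: constant_indices_def power_mult_distrib)
    then show ?thesis by (rule power2_le_imp_le) simp
  qed
  then show ?thesis by (rule that)
qed

lemma rad_bounded_constant_indicesI:
  assumes "\<And>l. l \<in> I \<Longrightarrow> bounded_linear (F l)" "\<And>l x. l \<in> I \<Longrightarrow> norm (F l x) \<le> K * norm x"
    and "0 \<le> K"
  shows "rad_bounded constant_indices I F"
proof (rule rad_bounded_dominated[OF _ assms(3) rad_bounded_id])
  fix m ls xs and \<epsilon> :: "nat \<Rightarrow> real"
  assume ls: "constant_indices m ls" "\<forall>n<m. ls n \<in> I"
  show "norm (\<Sum>n<m. \<epsilon> n *\<^sub>R F (ls n) (xs n)) \<le> K * norm (\<Sum>n<m. \<epsilon> n *\<^sub>R xs n)"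
  proof (cases "m = 0")
    case False
    then have l: "ls 0 \<in> I" using ls by auto
    note lin = bounded_linear.linear[OF assms(1)[OF l]]
    have "(\<Sum>n<m. \<epsilon> n *\<^sub>R F (ls n) (xs n)) = (\<Sum>n<m. \<epsilon> n *\<^sub>R F (ls 0) (xs n))"
    proof (rule sum.cong)
      fix n assume "n \<in> {..<m}"
      then show "\<epsilon> n *\<^sub>R F (ls n) (xs n) = \<epsilon> n *\<^sub>R F (ls 0) (xs n)"
        using ls(1) unfolding constant_indices_def by (metis lessThan_iff)
    qed simp
    also have "\<dots> = F (ls 0) (\<Sum>n<m. \<epsilon> n *\<^sub>R xs n)"
      by (simp only: linear_sum[OF lin] linear_scale[OF lin])
    finally show ?thesis using assms(2)[OF l] by simp
  qed simp
qed

lemma rad_bounded_constant_indices_iff: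
  assumes "\<And>l. l \<in> I \<Longrightarrow> bounded_linear (F l)"
  shows "rad_bounded constant_indices I F \<longleftrightarrow> (\<exists>K. \<forall>l\<in>I. \<forall>x. norm (F l x) \<le> K * norm x)"
proof
  assume "\<exists>K. \<forall>l\<in>I. \<forall>x. norm (F l x) \<le> K * norm x"
  then obtain K where K: "\<forall>l\<in>I. \<forall>x. norm (F l x) \<le> K * norm x" by blast
  have "norm (F l x) \<le> max K 0 * norm x" if "l \<in> I" for l x
    using K that mult_right_mono[of K "max K 0" "norm x"] by (meson max.cobounded1 norm_ge_zero order_trans)
  then show "rad_bounded constant_indices I F"
    by (intro rad_bounded_constant_indicesI assms) auto
qed (metis rad_bounded_constant_indices_imp_bound)

lemma R_bounded_iff_rad_bounded:
  "R_bounded {F l | l. l \<in> I} \<longleftrightarrow> (\<forall>l\<in>I. bounded_clinear (F l)) \<and> rad_bounded (\<lambda>_ _. True) I F"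
proof
  assume R: "R_bounded {F l | l. l \<in> I}"
  then obtain K where K: "\<forall>m Ts xs. (\<forall>n<m. Ts n \<in> {F l | l. l \<in> I}) \<longrightarrow>
      rad_avg m (\<lambda>n. Ts n (xs n)) \<le> K\<^sup>2 * rad_avg m xs"
    unfolding R_bounded_def by blast
  have "rad_avg m (\<lambda>n. F (ls n) (xs n)) \<le> K\<^sup>2 * rad_avg m xs" if "\<forall>n<m. ls n \<in> I" for m ls xs
    using K[rule_format, of m "\<lambda>n. F (ls n)" xs] that by blast
  then have "rad_bounded (\<lambda>_ _. True) I F"
    unfolding rad_bounded_def by blast
  moreover have "\<forall>l\<in>I. bounded_clinear (F l)"
    using R unfolding R_bounded_def by blast
  ultimately show "(\<forall>l\<in>I. bounded_clinear (F l)) \<and> rad_bounded (\<lambda>_ _. True) I F" by blast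
next
  assume *: "(\<forall>l\<in>I. bounded_clinear (F l)) \<and> rad_bounded (\<lambda>_ _. True) I F"
  then obtain K where K: "\<forall>m ls xs. (\<forall>n<m. ls n \<in> I) \<longrightarrow>
      rad_avg m (\<lambda>n. F (ls n) (xs n)) \<le> K\<^sup>2 * rad_avg m xs"
    unfolding rad_bounded_def by blast
  have "rad_avg m (\<lambda>n. Ts n (xs n)) \<le> K\<^sup>2 * rad_avg m xs"
    if Ts: "\<forall>n<m. Ts n \<in> {F l | l. l \<in> I}" for m Ts xs
  proof -
    define ls where "ls n = (SOME l. l \<in> I \<and> Ts n = F l)" for n
    have ls: "ls n \<in> I \<and> Ts n = F (ls n)" if "n < m" for n
    proof -
      have "\<exists>l. l \<in> I \<and> Ts n = F l" using Ts that by blast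
      then show ?thesis unfolding ls_def by (rule someI_ex)
    qed
    then have "rad_avg m (\<lambda>n. Ts n (xs n)) = rad_avg m (\<lambda>n. F (ls n) (xs n))"
      by (intro rad_avg_cong) auto
    also have "\<dots> \<le> K\<^sup>2 * rad_avg m xs"
    proof -
      have "\<forall>n<m. ls n \<in> I" using ls by blast
      then show ?thesis using K by blast
    qed
    finally show ?thesis .
  qed
  with * show "R_bounded {F l | l. l \<in> I}"
    unfolding R_bounded_def by blast
qed

section \<open>Sectoriality in terms of Rademacher bounds\<close>

definition rad_bounded_resolvents ::
    "(nat \<Rightarrow> (nat \<Rightarrow> complex) \<Rightarrow> bool) \<Rightarrow> complex set \<Rightarrow> 'a::complex_normed_vector set \<Rightarrow>
      ('a \<Rightarrow> 'a) \<Rightarrow> bool" where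
  "rad_bounded_resolvents Q I DT T \<longleftrightarrow>
     I \<subseteq> resolvent_set DT T \<and> rad_bounded Q I (\<lambda>l x. cscale l (resolvent DT T l x))"

definition rad_bounded_inverses ::
    "(nat \<Rightarrow> (nat \<Rightarrow> complex) \<Rightarrow> bool) \<Rightarrow> complex set \<Rightarrow>
      (complex \<Rightarrow> 'a::complex_normed_vector \<Rightarrow> 'a) \<Rightarrow> bool" where
  "rad_bounded_inverses Q I M \<longleftrightarrow> (\<forall>l\<in>I. invertible_bdd (M l)) \<and> rad_bounded Q I (\<lambda>l. inv (M l))"

lemma rad_bounded_constant_indices_iff_onorm:
  assumes "\<forall>l\<in>I. bounded_clinear (F l)"
  shows "rad_bounded constant_indices I F \<longleftrightarrow> (\<exists>K. \<forall>l\<in>I. onorm (F l) \<le> K)"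
proof -
  have "(\<exists>K. \<forall>l\<in>I. \<forall>x. norm (F l x) \<le> K * norm x) \<longleftrightarrow> (\<exists>K. \<forall>l\<in>I. onorm (F l) \<le> K)"
  proof
    assume "\<exists>K. \<forall>l\<in>I. \<forall>x. norm (F l x) \<le> K * norm x"
    then obtain K where "\<forall>l\<in>I. \<forall>x. norm (F l x) \<le> max K 0 * norm x"
      by (meson max.cobounded1 mult_right_mono norm_ge_zero order_trans)
    then show "\<exists>K. \<forall>l\<in>I. onorm (F l) \<le> K"
      by (metis max.cobounded2 onorm_bound)
  next
    assume "\<exists>K. \<forall>l\<in>I. onorm (F l) \<le> K"
    then show "\<exists>K. \<forall>l\<in>I. \<forall>x. norm (F l x) \<le> K * norm x"
      using assms bounded_clinear_norm by (meson mult_right_mono norm_ge_zero order_trans)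
  qed
  with assms show ?thesis
    by (simp add: rad_bounded_constant_indices_iff bounded_clinear_imp_bounded_linear)
qed

lemma sect_cond_iff:
  "sect_cond DT T \<phi> \<longleftrightarrow>
     0 < \<phi> \<and> \<phi> < pi \<and> rad_bounded_resolvents constant_indices (sector_compl \<phi>) DT T"
  using rad_bounded_constant_indices_iff_onorm[of "sector_compl \<phi>" "\<lambda>l x. cscale l (resolvent DT T l x)"]
    scaled_resolvent_bounded_clinear
  unfolding sect_cond_def rad_bounded_resolvents_def by blast

lemma M_cond_iff:
  "M_cond \<psi> M \<longleftrightarrow>
     (\<forall>\<phi>. \<psi> < \<phi> \<and> \<phi> < pi \<longrightarrow> rad_bounded_inverses constant_indices (sector_compl \<phi>) M)"
  using rad_bounded_constant_indices_iff_onorm invertible_bddD(3)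
  unfolding M_cond_def rad_bounded_inverses_def by (metis (no_types, lifting))

lemma M_R_cond_iff:
  "M_R_cond \<psi> M \<longleftrightarrow>
     (\<forall>\<phi>. \<psi> < \<phi> \<and> \<phi> < pi \<longrightarrow> rad_bounded_inverses (\<lambda>_ _. True) (sector_compl \<phi>) M)"
proof -
  have "R_bounded {inv (M l) | l. l \<in> I} \<longleftrightarrow> rad_bounded (\<lambda>_ _. True) I (\<lambda>l. inv (M l))"
    if "\<forall>l\<in>I. invertible_bdd (M l)" for I
    using that invertible_bddD(3) R_bounded_iff_rad_bounded[of "\<lambda>l. inv (M l)" I] by blast
  then show ?thesis
    unfolding M_R_cond_def rad_bounded_inverses_def by blast
qed

lemma sect_cond_mono:
  assumes "sect_cond DT T \<omega>" "\<omega> \<le> \<phi>" "\<phi> < pi"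
  shows "sect_cond DT T \<phi>"
  using assms sector_compl_antimono[OF assms(2)] rad_bounded_mono[of constant_indices]
  unfolding sect_cond_iff rad_bounded_resolvents_def by (meson order.strict_trans2 order_trans)

lemma sect_cond_if_sect_angle_less:
  assumes "sectorial DT T" "sect_angle DT T < \<phi>" "\<phi> < pi"
  shows "sect_cond DT T \<phi>"
proof -
  have "{\<omega>. sect_cond DT T \<omega>} \<noteq> {}" using assms(1) by (auto simp: sectorial_def)
  then obtain \<omega> where "sect_cond DT T \<omega>" "\<omega> < \<phi>"
    using cInf_lessD[of "{\<omega>. sect_cond DT T \<omega>}" \<phi>] assms(2) by (auto simp: sect_angle_def)
  then show ?thesis using sect_cond_mono assms(3) by (meson less_imp_le)
qed

lemma sect_angle_nonneg:
  assumes "sectorial DT T"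
  shows "0 \<le> sect_angle DT T"
proof -
  have "{\<omega>. sect_cond DT T \<omega>} \<noteq> {}" using assms by (auto simp: sectorial_def)
  then show ?thesis
    unfolding sect_angle_def by (rule cInf_greatest) (auto simp: sect_cond_def)
qed

lemma cInf_le_if_interval_subset:
  fixes S :: "real set"
  assumes "\<psi> < pi" "bdd_below S" "\<And>\<phi>. \<psi> < \<phi> \<Longrightarrow> \<phi> < pi \<Longrightarrow> \<phi> \<in> S"
  shows "Inf S \<le> \<psi>"
proof (rule ccontr)
  assume "\<not> Inf S \<le> \<psi>"
  define \<phi> where "\<phi> = (\<psi> + min (Inf S) pi) / 2"
  have "\<psi> < \<phi>" "\<phi> < pi" "\<phi> < Inf S" using \<open>\<not> Inf S \<le> \<psi>\<close> assms(1) by (auto simp: \<phi>_def min_def)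
  then show False using cInf_lower[OF assms(3) assms(2)] by fastforce
qed

lemma sect_angle_le:
  assumes "\<psi> < pi" "\<And>\<phi>. \<psi> < \<phi> \<Longrightarrow> \<phi> < pi \<Longrightarrow> sect_cond DT T \<phi>"
  shows "sect_angle DT T \<le> \<psi>"
  unfolding sect_angle_def
proof (rule cInf_le_if_interval_subset[OF assms(1)])
  show "bdd_below {\<omega>. sect_cond DT T \<omega>}"
    by (rule bdd_belowI[where m=0]) (auto simp: sect_cond_def)
qed (use assms in auto)

lemma R_sect_cond_mono:
  assumes "R_sect_cond DT T \<omega>" "\<omega> \<le> \<phi>" "\<phi> < pi"
  shows "R_sect_cond DT T \<phi>"
proof -
  have sub: "sector_compl \<phi> \<subseteq> sector_compl \<omega>" by (rule sector_compl_antimono[OF assms(2)])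
  have "rad_bounded (\<lambda>_ _. True) (sector_compl \<phi>) F"
    if "rad_bounded (\<lambda>_ _. True) (sector_compl \<omega>) F" for F :: "complex \<Rightarrow> 'a \<Rightarrow> 'a"
    using rad_bounded_mono[OF that sub] by blast
  with sub assms show ?thesis
    unfolding R_sect_cond_def R_bounded_iff_rad_bounded by auto
qed

lemma R_sect_cond_if_R_angle_less:
  assumes "R_sectorial DT T" "R_angle DT T < \<phi>" "\<phi> < pi"
  shows "R_sect_cond DT T \<phi>"
proof -
  have "{\<omega>. R_sect_cond DT T \<omega>} \<noteq> {}" using assms(1) by (auto simp: R_sectorial_def)
  then obtain \<omega> where "R_sect_cond DT T \<omega>" "\<omega> < \<phi>"
    using cInf_lessD[of "{\<omega>. R_sect_cond DT T \<omega>}" \<phi>] assms(2) by (auto simp: R_angle_def)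
  then show ?thesis using R_sect_cond_mono assms(3) by (meson less_imp_le)
qed

lemma R_angle_le:
  assumes "\<psi> < pi" "\<And>\<phi>. \<psi> < \<phi> \<Longrightarrow> \<phi> < pi \<Longrightarrow> R_sect_cond DT T \<phi>"
  shows "R_angle DT T \<le> \<psi>"
  unfolding R_angle_def
proof (rule cInf_le_if_interval_subset[OF assms(1)])
  show "bdd_below {\<omega>. R_sect_cond DT T \<omega>}"
    by (rule bdd_belowI[where m="sect_angle DT T"]) (auto simp: R_sect_cond_def)
qed (use assms in auto)

lemma sect_angle_le_R_angle:
  assumes "R_sectorial DT T"
  shows "sect_angle DT T \<le> R_angle DT T"
proof -
  have "{\<sigma>. R_sect_cond DT T \<sigma>} \<noteq> {}" using assms by (auto simp: R_sectorial_def)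
  then show ?thesis
    unfolding R_angle_def by (rule cInf_greatest) (auto simp: R_sect_cond_def)
qed

lemma sectorial_rad_bounded_resolvents:
  assumes "sectorial DT T" "sect_angle DT T < \<phi>" "\<phi> < pi"
  shows "rad_bounded_resolvents constant_indices (sector_compl \<phi>) DT T"
  using sect_cond_if_sect_angle_less[OF assms] by (simp add: sect_cond_iff)

lemma R_sectorial_rad_bounded_resolvents:
  assumes "R_sectorial DT T" "R_angle DT T < \<phi>" "\<phi> < pi"
  shows "rad_bounded_resolvents (\<lambda>_ _. True) (sector_compl \<phi>) DT T"
proof -
  have R: "R_sect_cond DT T \<phi>" by (rule R_sect_cond_if_R_angle_less[OF assms])
  then have "sect_cond DT T \<phi>"
    using assms(1,3) sect_cond_if_sect_angle_less by (auto simp: R_sect_cond_def R_sectorial_def)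
  with R show ?thesis
    unfolding R_sect_cond_def R_bounded_iff_rad_bounded
    by (simp add: sect_cond_iff rad_bounded_resolvents_def)
qed

lemma sectorial_of_angle_iff:
  assumes "0 \<le> \<psi>" "\<psi> < pi"
  shows "sectorial_of_angle DT T \<psi> \<longleftrightarrow>
    clinear_on DT T \<and> closure DT = UNIV \<and> closure (T ` DT) = UNIV \<and>
    (\<forall>\<phi>. \<psi> < \<phi> \<and> \<phi> < pi \<longrightarrow> rad_bounded_resolvents constant_indices (sector_compl \<phi>) DT T)"
    (is "_ \<longleftrightarrow> ?basic \<and> ?bounded")
proof
  assume "sectorial_of_angle DT T \<psi>"
  then show "?basic \<and> ?bounded"
    using sectorial_rad_bounded_resolvents by (force simp: sectorial_of_angle_def sectorial_def)
next
  assume *: "?basic \<and> ?bounded"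
  then have sc: "sect_cond DT T \<phi>" if "\<psi> < \<phi>" "\<phi> < pi" for \<phi>
    using that assms by (simp add: sect_cond_iff)
  have "sect_cond DT T ((\<psi> + pi) / 2)" using assms(2) by (intro sc) auto
  then have "sectorial DT T" using * unfolding sectorial_def by blast
  then show "sectorial_of_angle DT T \<psi>"
    using sect_angle_le[OF assms(2) sc] by (simp add: sectorial_of_angle_def)
qed

lemma R_sectorial_of_angle_iff:
  assumes "0 \<le> \<psi>" "\<psi> < pi"
  shows "R_sectorial_of_angle DT T \<psi> \<longleftrightarrow>
    clinear_on DT T \<and> closure DT = UNIV \<and> closure (T ` DT) = UNIV \<and>
    (\<forall>\<phi>. \<psi> < \<phi> \<and> \<phi> < pi \<longrightarrow> rad_bounded_resolvents (\<lambda>_ _. True) (sector_compl \<phi>) DT T)"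
    (is "_ \<longleftrightarrow> ?basic \<and> ?bounded")
proof
  assume "R_sectorial_of_angle DT T \<psi>"
  then show "?basic \<and> ?bounded"
    using R_sectorial_rad_bounded_resolvents
    by (force simp: R_sectorial_of_angle_def R_sectorial_def sectorial_def)
next
  assume *: "?basic \<and> ?bounded"
  then have "sectorial_of_angle DT T \<psi>"
    using rad_bounded_all_indices_imp
    unfolding sectorial_of_angle_iff[OF assms] rad_bounded_resolvents_def by blast
  then have sectorial: "sectorial DT T" and angle: "sect_angle DT T \<le> \<psi>"
    by (simp_all add: sectorial_of_angle_def)
  have R: "R_sect_cond DT T \<phi>" if \<phi>: "\<psi> < \<phi>" "\<phi> < pi" for \<phi>
  proof -
    have "sector_compl \<phi> \<subseteq> resolvent_set DT T"
      and "rad_bounded (\<lambda>_ _. True) (sector_compl \<phi>) (\<lambda>l x. cscale l (resolvent DT T l x))"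
      using * \<phi> by (auto simp: rad_bounded_resolvents_def)
    then show ?thesis
      using \<phi> angle unfolding R_sect_cond_def R_bounded_iff_rad_bounded
      by (auto intro!: scaled_resolvent_bounded_clinear)
  qed
  have "R_sect_cond DT T ((\<psi> + pi) / 2)" using assms(2) by (intro R) auto
  then have "R_sectorial DT T" using sectorial unfolding R_sectorial_def by blast
  then show "R_sectorial_of_angle DT T \<psi>"
    using R_angle_le[OF assms(2) R] by (simp add: R_sectorial_of_angle_def)
qed

section \<open>Sectorial operators are injective\<close>

lemma sect_cond_negative_axis:
  assumes "sect_cond DT T \<phi>"
  obtains K where "0 \<le> K" "\<And>t. t > 0 \<Longrightarrow> complex_of_real (- t) \<in> resolvent_set DT T"
    "\<And>t x. t > 0 \<Longrightarrow>
       norm (cscale (complex_of_real (- t)) (resolvent DT T (complex_of_real (- t)) x)) \<le> K * norm x"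
proof -
  obtain K where \<phi>: "\<phi> < pi" and res: "sector_compl \<phi> \<subseteq> resolvent_set DT T"
    and K: "\<forall>l \<in> sector_compl \<phi>. onorm (\<lambda>x. cscale l (resolvent DT T l x)) \<le> K"
    using assms unfolding sect_cond_def by blast
  show ?thesis
  proof (rule that[of "max K 0"])
    fix t :: real and x assume "t > 0"
    then have l: "complex_of_real (- t) \<in> sector_compl \<phi>"
      using negative_real_in_sector_compl \<phi> by blast
    then show "complex_of_real (- t) \<in> resolvent_set DT T" using res by blast
    have "norm (cscale (complex_of_real (- t)) (resolvent DT T (complex_of_real (- t)) x))
        \<le> onorm (\<lambda>x. cscale (complex_of_real (- t)) (resolvent DT T (complex_of_real (- t)) x)) * norm x"
      using l res by (intro bounded_clinear_norm scaled_resolvent_bounded_clinear) blast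
    also have "\<dots> \<le> max K 0 * norm x"
    proof -
      have "onorm (\<lambda>x. cscale (complex_of_real (- t)) (resolvent DT T (complex_of_real (- t)) x)) \<le> K"
        using K l by blast
      then show ?thesis by (intro mult_right_mono) auto
    qed
    finally show "norm (cscale (complex_of_real (- t)) (resolvent DT T (complex_of_real (- t)) x))
        \<le> max K 0 * norm x" .
  qed simp
qed

lemma norm_apply_scaled_resolvent_le:
  assumes "clinear_on DT T" "l \<in> resolvent_set DT T"
    and "\<And>x. norm (cscale l (resolvent DT T l x)) \<le> K * norm x"
  shows "norm (T (cscale l (resolvent DT T l x))) \<le> cmod l * (K + 1) * norm x"
proof -
  have "T (cscale l (resolvent DT T l x)) = cscale l (cscale l (resolvent DT T l x) - x)"
    using assms(1,2) by (simp add: clinear_on_cscale resolvent_mem apply_resolvent)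
  then have "norm (T (cscale l (resolvent DT T l x))) = cmod l * norm (cscale l (resolvent DT T l x) - x)"
    by (simp add: norm_cscale)
  also have "\<dots> \<le> cmod l * ((K + 1) * norm x)"
    using norm_triangle_ineq4[of "cscale l (resolvent DT T l x)" x] assms(3)[of x]
    by (intro mult_left_mono) (auto simp: algebra_simps)
  finally show ?thesis by (simp add: mult.assoc)
qed

lemma le_if_le_add_scaled:
  fixes a b c :: real
  assumes "\<And>t. t > 0 \<Longrightarrow> a \<le> b + t * c" "0 \<le> c"
  shows "a \<le> b"
proof (rule ccontr)
  assume "\<not> a \<le> b"
  then have "0 < (a - b) / (c + 1)" using assms(2) by simp
  then have "a \<le> b + (a - b) / (c + 1) * c" by (rule assms(1))
  moreover have "(a - b) * c < (a - b) * (c + 1)"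
    using \<open>\<not> a \<le> b\<close> by (simp add: algebra_simps)
  then have "(a - b) / (c + 1) * c < a - b"
    using assms(2) by (simp add: field_simps)
  ultimately show False by linarith
qed

text \<open>For \<open>\<lambda> = -t\<close> and \<open>T x = 0\<close>: \<open>x = \<lambda> R(\<lambda>,T) x = \<lambda> R(\<lambda>,T) (x - T u) + T \<lambda> R(\<lambda>,T) u\<close>, and the last
  term is \<open>O(t)\<close>.\<close>

lemma kernel_norm_le_dist_range:
  assumes lin: "clinear_on DT T" and "sect_cond DT T \<phi>"
  obtains K where "\<And>x u. x \<in> DT \<Longrightarrow> T x = 0 \<Longrightarrow> u \<in> DT \<Longrightarrow> norm x \<le> K * norm (x - T u)"
proof -
  obtain K where "0 \<le> K" and res: "\<And>t. t > 0 \<Longrightarrow> complex_of_real (- t) \<in> resolvent_set DT T"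
    and bound: "\<And>t y. t > 0 \<Longrightarrow>
      norm (cscale (complex_of_real (- t)) (resolvent DT T (complex_of_real (- t)) y)) \<le> K * norm y"
    using sect_cond_negative_axis[OF assms(2)] by metis
  have "norm x \<le> K * norm (x - T u)" if x: "x \<in> DT" "T x = 0" and u: "u \<in> DT" for x u
  proof (rule le_if_le_add_scaled)
    fix t :: real assume t: "t > 0"
    define l where "l = complex_of_real (- t)"
    define P where "P y = cscale l (resolvent DT T l y)" for y
    have l: "l \<in> resolvent_set DT T" using res[OF t] by (simp add: l_def)
    have P: "bounded_clinear P"
      unfolding P_def[abs_def] by (rule scaled_resolvent_bounded_clinear[OF l])
    have "P x = x"
      using resolvent_left_inverse[OF l x(1)] x(2)
      by (simp add: P_def bounded_clinear_cscale[OF resolvent_bounded_clinear[OF l]])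
    then have "x = P (x - T u) + P (T u)"
      by (simp add: bounded_clinear_diff[OF P])
    moreover have "P (T u) = T (P u)"
      using l u lin by (simp add: P_def resolvent_commute clinear_on_cscale resolvent_mem)
    moreover have "norm (T (P u)) \<le> t * (K + 1) * norm u"
      using norm_apply_scaled_resolvent_le[OF lin l] bound[OF t] t by (simp add: P_def l_def)
    ultimately show "norm x \<le> K * norm (x - T u) + t * ((K + 1) * norm u)"
      using norm_triangle_ineq[of "P (x - T u)" "P (T u)"] bound[OF t, of "x - T u"]
      by (simp add: P_def l_def algebra_simps)
  qed (use \<open>0 \<le> K\<close> in simp)
  then show ?thesis by (rule that)
qed

lemma sectorial_injective:
  assumes "sectorial DT T" "x \<in> DT" "T x = 0"
  shows "x = 0"
proof -
  have lin: "clinear_on DT T" and range: "closure (T ` DT) = UNIV"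
    and "\<exists>\<omega>. sect_cond DT T \<omega>"
    using assms(1) by (auto simp: sectorial_def)
  then obtain K where K: "\<And>u. u \<in> DT \<Longrightarrow> norm x \<le> K * norm (x - T u)"
    using kernel_norm_le_dist_range assms(2,3) by metis
  have "norm x \<le> 0 + e" if e: "e > 0" for e
  proof -
    obtain y where "y \<in> T ` DT" "dist x y < e / (\<bar>K\<bar> + 1)"
      using closure_approachableD[of x "T ` DT" "e / (\<bar>K\<bar> + 1)"] range e by auto
    then obtain u where u: "u \<in> DT" and close: "norm (x - T u) < e / (\<bar>K\<bar> + 1)"
      by (auto simp: dist_norm)
    have "norm x \<le> \<bar>K\<bar> * norm (x - T u)" using K[OF u] by (meson abs_ge_self mult_right_mono norm_ge_zero order_trans)
    also have "\<dots> \<le> \<bar>K\<bar> * (e / (\<bar>K\<bar> + 1))" using close by (intro mult_left_mono) auto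
    also have "\<dots> \<le> e" using e by (simp add: field_simps)
    finally show ?thesis by simp
  qed
  then have "norm x \<le> 0" by (rule field_le_epsilon)
  then show ?thesis by simp
qed

section \<open>Hahn--Banach\<close>

text \<open>Graphs of linear functionals on subspaces through \<open>x0\<close> that are dominated by \<open>p\<close> and
  agree with \<open>p\<close> at \<open>x0\<close>: a subspace of \<open>V \<times> \<real>\<close> is a graph iff it meets \<open>0 \<times> \<real>\<close> only in
  the origin.\<close>

definition dominated_graph :: "('v::real_vector \<Rightarrow> real) \<Rightarrow> 'v \<Rightarrow> ('v \<times> real) set \<Rightarrow> bool" where
  "dominated_graph p x0 G \<longleftrightarrow> (0, 0) \<in> G \<and> (\<forall>u\<in>G. \<forall>v\<in>G. u + v \<in> G) \<and> (\<forall>c. \<forall>u\<in>G. c *\<^sub>R u \<in> G) \<and>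
     (\<forall>a. (0, a) \<in> G \<longrightarrow> a = 0) \<and> (\<forall>x a. (x, a) \<in> G \<longrightarrow> a \<le> p x) \<and> (x0, p x0) \<in> G"

lemma dominated_graphD:
  assumes "dominated_graph p x0 G"
  shows "(0, 0) \<in> G" "\<And>u v. u \<in> G \<Longrightarrow> v \<in> G \<Longrightarrow> u + v \<in> G" "\<And>c u. u \<in> G \<Longrightarrow> c *\<^sub>R u \<in> G"
    "\<And>a. (0, a) \<in> G \<Longrightarrow> a = 0" "\<And>x a. (x, a) \<in> G \<Longrightarrow> a \<le> p x" "(x0, p x0) \<in> G"
  using assms unfolding dominated_graph_def by blast+

lemma dominated_graph_unique:
  assumes "dominated_graph p x0 G" "(x, a) \<in> G" "(x, b) \<in> G"
  shows "a = b"
proof -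
  have "(x, a) + (-1) *\<^sub>R (x, b) \<in> G" using assms unfolding dominated_graph_def by blast
  then show ?thesis using assms(1) unfolding dominated_graph_def by fastforce
qed

lemma dominated_graph_Union:
  assumes "C \<in> chains {G. dominated_graph p x0 G}" "C \<noteq> {}"
  shows "dominated_graph p x0 (\<Union>C)"
proof -
  have dom: "\<And>G. G \<in> C \<Longrightarrow> dominated_graph p x0 G"
    and chain: "\<And>G H. G \<in> C \<Longrightarrow> H \<in> C \<Longrightarrow> G \<subseteq> H \<or> H \<subseteq> G"
    using assms(1) unfolding chains_def chain_subset_def by auto
  have add: "u + v \<in> \<Union>C" if uv: "u \<in> \<Union>C" "v \<in> \<Union>C" for u v
  proof -
    obtain G H where "G \<in> C" "H \<in> C" "u \<in> G" "v \<in> H" using uv by blast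
    then show ?thesis
      using chain[of G H] dom[of G] dom[of H] unfolding dominated_graph_def by blast
  qed
  obtain G where G: "G \<in> C" using assms(2) by blast
  show ?thesis
    unfolding dominated_graph_def
  proof (intro conjI allI ballI impI add)
    show "(0, 0) \<in> \<Union>C" "(x0, p x0) \<in> \<Union>C"
      using G dom[OF G] unfolding dominated_graph_def by blast+
  next
    fix c :: real and u assume "u \<in> \<Union>C"
    then show "c *\<^sub>R u \<in> \<Union>C" using dom unfolding dominated_graph_def by blast
  next
    fix a assume "(0, a) \<in> \<Union>C"
    then show "a = 0" using dom unfolding dominated_graph_def by blast
  next
    fix x a assume "(x, a) \<in> \<Union>C"
    then show "a \<le> p x" using dom unfolding dominated_graph_def by blast
  qed
qed

context
  fixes p :: "'v::real_vector \<Rightarrow> real"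
  assumes p_add: "\<And>x y. p (x + y) \<le> p x + p y"
    and p_scale: "\<And>c x. c \<ge> 0 \<Longrightarrow> p (c *\<^sub>R x) = c * p x"
begin

lemma sublinear_zero: "p 0 = 0"
  using p_scale[of 0 0] by simp

lemma dominated_graph_line: "dominated_graph p x0 {(t *\<^sub>R x0, t * p x0) | t. True}"
  unfolding dominated_graph_def
proof (intro conjI allI ballI impI)
  show "(0, 0) \<in> {(t *\<^sub>R x0, t * p x0) | t. True}" by (auto intro!: exI[of _ 0])
  show "(x0, p x0) \<in> {(t *\<^sub>R x0, t * p x0) | t. True}" by (auto intro!: exI[of _ 1])
next
  fix u v assume "u \<in> {(t *\<^sub>R x0, t * p x0) | t. True}" "v \<in> {(t *\<^sub>R x0, t * p x0) | t. True}"
  then obtain s t where "u = (s *\<^sub>R x0, s * p x0)" "v = (t *\<^sub>R x0, t * p x0)" by blast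
  then show "u + v \<in> {(t *\<^sub>R x0, t * p x0) | t. True}"
    by (auto intro!: exI[of _ "s + t"] simp: algebra_simps scaleR_add_left)
next
  fix c :: real and u assume "u \<in> {(t *\<^sub>R x0, t * p x0) | t. True}"
  then obtain s where "u = (s *\<^sub>R x0, s * p x0)" by blast
  then show "c *\<^sub>R u \<in> {(t *\<^sub>R x0, t * p x0) | t. True}" by (auto intro!: exI[of _ "c * s"])
next
  fix a assume "(0, a) \<in> {(t *\<^sub>R x0, t * p x0) | t. True}"
  then obtain t where "0 = t *\<^sub>R x0" "a = t * p x0" by auto
  then show "a = 0" using sublinear_zero by (cases "t = 0") auto
next
  fix x a assume "(x, a) \<in> {(t *\<^sub>R x0, t * p x0) | t. True}"
  then obtain t where t: "x = t *\<^sub>R x0" "a = t * p x0" by auto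
  show "a \<le> p x"
  proof (cases "t \<ge> 0")
    case True
    then show ?thesis using t p_scale by simp
  next
    case False
    have "- p x0 \<le> p (- x0)" using p_add[of x0 "- x0"] sublinear_zero by simp
    then have "(- t) * (- p x0) \<le> (- t) * p (- x0)" using False by (intro mult_left_mono) auto
    also have "\<dots> = p x" using t False p_scale[of "- t" "- x0"] by simp
    finally show ?thesis using t by simp
  qed
qed

text \<open>The value \<open>c\<close> of the extension at a new direction \<open>z\<close> must lie between
  \<open>sup (b - p (y - z))\<close> and \<open>inf (p (y + z) - b)\<close> over \<open>(y, b) \<in> M\<close>; subadditivity of \<open>p\<close> makes
  this interval nonempty.\<close>

lemma dominated_graph_extension_value:
  assumes M: "dominated_graph p x0 M"
  obtains c where "\<And>y b. (y, b) \<in> M \<Longrightarrow> b - p (y - z) \<le> c" "\<And>y b. (y, b) \<in> M \<Longrightarrow> c \<le> p (y + z) - b"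
proof -
  define S where "S = {b - p (y - z) | y b. (y, b) \<in> M}"
  have S_le: "s \<le> p (y' + z) - b'" if "s \<in> S" "(y', b') \<in> M" for s y' b'
  proof -
    obtain y b where s: "s = b - p (y - z)" and yb: "(y, b) \<in> M" using \<open>s \<in> S\<close> unfolding S_def by blast
    have "b + b' \<le> p (y + y')"
      using dominated_graphD(5)[OF M] dominated_graphD(2)[OF M yb that(2)] by simp
    also have "\<dots> \<le> p (y - z) + p (y' + z)" using p_add[of "y - z" "y' + z"] by (simp add: algebra_simps)
    finally show ?thesis using s by simp
  qed
  have "S \<noteq> {}" using dominated_graphD(1)[OF M] unfolding S_def by blast
  moreover have "bdd_above S" using S_le dominated_graphD(1)[OF M] by (auto intro!: bdd_aboveI)
  ultimately show ?thesis
    using S_le by (intro that[of "Sup S"] cSup_upper cSup_least) (auto simp: S_def)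
qed

lemma dominated_graph_extension_dominated:
  assumes M: "dominated_graph p x0 M" and xa: "(x, a) \<in> M"
    and c_lower: "\<And>y b. (y, b) \<in> M \<Longrightarrow> b - p (y - z) \<le> c"
    and c_upper: "\<And>y b. (y, b) \<in> M \<Longrightarrow> c \<le> p (y + z) - b"
  shows "a + t * c \<le> p (x + t *\<^sub>R z)"
proof -
  have xa': "(inverse s *\<^sub>R x, inverse s * a) \<in> M" for s
    using dominated_graphD(3)[OF M xa, of "inverse s"] by simp
  show ?thesis
  proof (cases t "0::real" rule: linorder_cases)
    case equal
    then show ?thesis using dominated_graphD(5)[OF M xa] by simp
  next
    case greater
    have "t * c \<le> t * (p (inverse t *\<^sub>R x + z) - inverse t * a)"
      using greater c_upper[OF xa'[of t]] by (intro mult_left_mono) auto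
    also have "\<dots> = p (x + t *\<^sub>R z) - a"
      using greater p_scale[of t "inverse t *\<^sub>R x + z"] by (simp add: algebra_simps scaleR_add_right)
    finally show ?thesis by simp
  next
    case less
    have "(- t) * (inverse (- t) * a - p (inverse (- t) *\<^sub>R x - z)) \<le> (- t) * c"
      using less c_lower[OF xa'[of "- t"]] by (intro mult_left_mono) auto
    moreover have "(- t) * p (inverse (- t) *\<^sub>R x - z) = p (x + t *\<^sub>R z)"
      using less p_scale[of "- t" "inverse (- t) *\<^sub>R x - z"] by (simp add: scaleR_diff_right)
    ultimately show ?thesis using less by (simp add: algebra_simps)
  qed
qed

lemma dominated_graph_extension:
  assumes M: "dominated_graph p x0 M" and z: "\<nexists>a. (z, a) \<in> M"
    and c_lower: "\<And>y b. (y, b) \<in> M \<Longrightarrow> b - p (y - z) \<le> c"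
    and c_upper: "\<And>y b. (y, b) \<in> M \<Longrightarrow> c \<le> p (y + z) - b"
  shows "dominated_graph p x0 {(x + t *\<^sub>R z, a + t * c) | x a t. (x, a) \<in> M}"
    (is "dominated_graph p x0 ?M'")
proof -
  note M0 = dominated_graphD(1)[OF M] and M_add = dominated_graphD(2)[OF M]
    and M_scale = dominated_graphD(3)[OF M]
  define M' where "M' = ?M'"
  have "dominated_graph p x0 M'"
    unfolding dominated_graph_def
  proof (intro conjI allI ballI impI)
    have "((0::'v), (0::real)) = (0 + 0 *\<^sub>R z, 0 + 0 * c)" by simp
    then show "(0, 0) \<in> M'" unfolding M'_def using M0 by blast
    have "(x0, p x0) = (x0 + 0 *\<^sub>R z, p x0 + 0 * c)" by simp
    then show "(x0, p x0) \<in> M'" unfolding M'_def using dominated_graphD(6)[OF M] by blast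
  next
    fix u v assume "u \<in> M'" "v \<in> M'"
    then obtain x1 a1 t1 x2 a2 t2 where u: "u = (x1 + t1 *\<^sub>R z, a1 + t1 * c)" "(x1, a1) \<in> M"
      and v: "v = (x2 + t2 *\<^sub>R z, a2 + t2 * c)" "(x2, a2) \<in> M" unfolding M'_def by blast
    have "u + v = ((x1 + x2) + (t1 + t2) *\<^sub>R z, (a1 + a2) + (t1 + t2) * c)"
      using u v by (simp add: algebra_simps scaleR_add_left)
    moreover have "(x1 + x2, a1 + a2) \<in> M" using M_add[OF u(2) v(2)] by simp
    ultimately show "u + v \<in> M'" unfolding M'_def by blast
  next
    fix d :: real and u assume "u \<in> M'"
    then obtain x a t where u: "u = (x + t *\<^sub>R z, a + t * c)" "(x, a) \<in> M" unfolding M'_def by blast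
    have "d *\<^sub>R u = (d *\<^sub>R x + (d * t) *\<^sub>R z, d * a + (d * t) * c)"
      using u by (simp add: algebra_simps)
    moreover have "(d *\<^sub>R x, d * a) \<in> M" using M_scale[OF u(2), of d] by simp
    ultimately show "d *\<^sub>R u \<in> M'" unfolding M'_def by blast
  next
    fix a' assume "(0, a') \<in> M'"
    then obtain x a t where e: "0 = x + t *\<^sub>R z" "a' = a + t * c" and xa: "(x, a) \<in> M"
      unfolding M'_def by auto
    show "a' = 0"
    proof (cases "t = 0")
      case True
      then show ?thesis using e xa dominated_graphD(4)[OF M] by simp
    next
      case False
      have "t *\<^sub>R z = - x" using e(1) by (simp add: eq_neg_iff_add_eq_0 add.commute)
      then have "z = (- inverse t) *\<^sub>R x"
        using False by (metis scaleR_minus_left scaleR_minus_right scaleR_scaleR left_inverse scaleR_one)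
      then have "(z, (- inverse t) * a) \<in> M" using M_scale[OF xa, of "- inverse t"] by simp
      then show ?thesis using z by blast
    qed
  next
    fix x' a' assume "(x', a') \<in> M'"
    then show "a' \<le> p x'"
      using dominated_graph_extension_dominated[OF M _ c_lower c_upper] unfolding M'_def by blast
  qed
  then show ?thesis by (simp add: M'_def)
qed

lemma dominated_graph_extend:
  assumes M: "dominated_graph p x0 M" and z: "\<nexists>a. (z, a) \<in> M"
  shows "\<exists>M'. dominated_graph p x0 M' \<and> M \<subset> M'"
proof -
  obtain c where c_lower: "\<And>y b. (y, b) \<in> M \<Longrightarrow> b - p (y - z) \<le> c"
    and c_upper: "\<And>y b. (y, b) \<in> M \<Longrightarrow> c \<le> p (y + z) - b"
    using dominated_graph_extension_value[OF M] by metis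
  define M' where "M' = {(x + t *\<^sub>R z, a + t * c) | x a t. (x, a) \<in> M}"
  have "dominated_graph p x0 M'"
    unfolding M'_def by (rule dominated_graph_extension[OF M z c_lower c_upper])
  moreover have "M \<subseteq> M'"
  proof
    fix u assume u: "u \<in> M"
    obtain x a where xa: "u = (x, a)" by (cases u)
    have "\<exists>x' a' t. u = (x' + t *\<^sub>R z, a' + t * c) \<and> (x', a') \<in> M"
      using u xa by (intro exI[of _ x] exI[of _ a] exI[of _ 0]) simp
    then show "u \<in> M'" unfolding M'_def by blast
  qed
  moreover have "(z, c) = (0 + 1 *\<^sub>R z, 0 + 1 * c)" by simp
  then have "(z, c) \<in> M'" unfolding M'_def using dominated_graphD(1)[OF M] by blast
  ultimately show ?thesis using z by blast
qed

lemma hahn_banach_sublinear: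
  "\<exists>F. (\<forall>x y. F (x + y) = F x + F y) \<and> (\<forall>c x. F (c *\<^sub>R x) = c * F x) \<and> (\<forall>x. F x \<le> p x) \<and>
     F x0 = p x0"
proof -
  have "\<exists>M\<in>{G. dominated_graph p x0 G}. \<forall>G\<in>{G. dominated_graph p x0 G}. M \<subseteq> G \<longrightarrow> G = M"
  proof (rule Zorn_Lemma2, intro ballI)
    fix C assume C: "C \<in> chains {G. dominated_graph p x0 G}"
    show "\<exists>U\<in>{G. dominated_graph p x0 G}. \<forall>G\<in>C. G \<subseteq> U"
    proof (cases "C = {}")
      case True
      then show ?thesis using dominated_graph_line[of x0] by blast
    next
      case False
      then show ?thesis using dominated_graph_Union[OF C False] by blast
    qed
  qed
  then obtain M where M: "dominated_graph p x0 M"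
    and max: "\<And>G. dominated_graph p x0 G \<Longrightarrow> M \<subseteq> G \<Longrightarrow> G = M" by blast
  have total: "\<exists>a. (z, a) \<in> M" for z
    using dominated_graph_extend[OF M] max by blast
  define F where "F z = (THE a. (z, a) \<in> M)" for z
  have FM: "(z, F z) \<in> M" for z
    using total[of z] dominated_graph_unique[OF M] unfolding F_def by (metis theI)
  have F_eq: "F z = a" if "(z, a) \<in> M" for z a
    using dominated_graph_unique[OF M that FM] by simp
  show ?thesis
  proof (intro exI conjI allI)
    fix x y show "F (x + y) = F x + F y" using dominated_graphD(2)[OF M FM[of x] FM[of y]] F_eq by simp
  next
    fix c :: real and x show "F (c *\<^sub>R x) = c * F x" using dominated_graphD(3)[OF M FM[of x], of c] F_eq by simp
  next
    fix x show "F x \<le> p x" using dominated_graphD(5)[OF M FM] .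
  next
    show "F x0 = p x0" using dominated_graphD(6)[OF M] F_eq by blast
  qed
qed

end

lemma infdist_add_le:
  fixes M :: "'x::real_normed_vector set"
  assumes M0: "0 \<in> M" and M_add: "\<And>x y. x \<in> M \<Longrightarrow> y \<in> M \<Longrightarrow> x + y \<in> M"
  shows "infdist (x + y) M \<le> infdist x M + infdist y M"
proof -
  have M: "M \<noteq> {}" using M0 by blast
  have "infdist (x + y) M - dist y b \<le> infdist x M" if b: "b \<in> M" for b
  proof -
    have "infdist (x + y) M - dist y b \<le> dist x a" if a: "a \<in> M" for a
    proof -
      have "infdist (x + y) M \<le> dist (x + y) (a + b)" by (rule infdist_le[OF M_add[OF a b]])
      also have "\<dots> \<le> dist x a + dist y b"
        by (simp add: dist_norm) (metis add_diff_add norm_triangle_ineq)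
      finally show ?thesis by simp
    qed
    then show ?thesis unfolding infdist_notempty[OF M] by (intro cINF_greatest[OF M]) auto
  qed
  then have "infdist (x + y) M - infdist x M \<le> dist y b" if "b \<in> M" for b using that by force
  then have "infdist (x + y) M - infdist x M \<le> infdist y M"
    unfolding infdist_notempty[OF M] by (intro cINF_greatest[OF M]) auto
  then show ?thesis by simp
qed

lemma infdist_scaleR:
  fixes M :: "'x::real_normed_vector set"
  assumes M0: "0 \<in> M" and M_scale: "\<And>c x. x \<in> M \<Longrightarrow> c *\<^sub>R x \<in> M"
  shows "infdist (c *\<^sub>R x) M = \<bar>c\<bar> * infdist x M"
proof (cases "c = 0")
  case True
  then show ?thesis using M0 by simp
next
  case False
  have M: "M \<noteq> {}" using M0 by blast
  have img: "M = (\<lambda>a. c *\<^sub>R a) ` M"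
  proof
    show "M \<subseteq> (\<lambda>a. c *\<^sub>R a) ` M"
    proof
      fix m assume "m \<in> M"
      then have "inverse c *\<^sub>R m \<in> M" by (rule M_scale)
      moreover have "m = c *\<^sub>R (inverse c *\<^sub>R m)" using False by simp
      ultimately show "m \<in> (\<lambda>a. c *\<^sub>R a) ` M" by blast
    qed
  qed (use M_scale in blast)
  have "infdist (c *\<^sub>R x) M = (INF a\<in>M. dist (c *\<^sub>R x) (c *\<^sub>R a))"
    unfolding infdist_notempty[OF M] by (subst img) (simp add: image_comp o_def)
  also have "\<dots> = (INF a\<in>M. \<bar>c\<bar> * dist x a)"
    by (simp add: dist_norm scaleR_diff_right[symmetric])
  also have "\<dots> = \<bar>c\<bar> * (INF a\<in>M. dist x a)"
  proof -
    have "mono ((*) \<bar>c\<bar>)" by (rule monoI) (simp add: mult_left_mono)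
    moreover have "continuous (at_right (Inf (dist x ` M))) ((*) \<bar>c\<bar>)" by (intro continuous_intros)
    ultimately show ?thesis
      using continuous_at_Inf_mono[of "(*) \<bar>c\<bar>" "dist x ` M"] M by (simp add: image_comp o_def)
  qed
  finally show ?thesis unfolding infdist_notempty[OF M] .
qed

text \<open>A real-linear functional \<open>F\<close> is the real part of the complex-linear functional
  \<open>x \<mapsto> F x - i F (i x)\<close>.\<close>

lemma bounded_clinear_complexify:
  fixes F :: "'x::complex_normed_vector \<Rightarrow> real"
  assumes F_add: "\<And>x y. F (x + y) = F x + F y" and F_scale: "\<And>c x. F (c *\<^sub>R x) = c * F x"
    and F_bound: "\<And>x. \<bar>F x\<bar> \<le> norm x"
  shows "bounded_clinear (\<lambda>x. Complex (F x) (- F (cscale \<i> x)))"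
proof (rule bounded_clinear_intro[where K=2])
  have F_cscale: "F (cscale c x) = Re c * F x + Im c * F (cscale \<i> x)" for c x
  proof -
    have "cscale c x = Re c *\<^sub>R x + Im c *\<^sub>R cscale \<i> x"
      by (metis complex_eq cscale_add_left cscale_cscale scaleR_cscale mult.commute)
    then show ?thesis by (simp add: F_add F_scale)
  qed
  fix c x
  have "F (cscale \<i> (cscale c x)) = - Im c * F x + Re c * F (cscale \<i> x)"
    using F_cscale[of "\<i> * c" x] by (simp add: cscale_cscale)
  then show "Complex (F (cscale c x)) (- F (cscale \<i> (cscale c x))) = cscale c (Complex (F x) (- F (cscale \<i> x)))"
    by (simp add: cscale_complex_def complex_eq_iff F_cscale[of c x] algebra_simps)
next
  fix x y
  show "Complex (F (x + y)) (- F (cscale \<i> (x + y))) =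
      Complex (F x) (- F (cscale \<i> x)) + Complex (F y) (- F (cscale \<i> y))"
    by (simp add: F_add cscale_add_right complex_eq_iff)
next
  fix x
  have "cmod (Complex (F x) (- F (cscale \<i> x))) \<le> \<bar>F x\<bar> + \<bar>F (cscale \<i> x)\<bar>"
    using cmod_le[of "Complex (F x) (- F (cscale \<i> x))"] by simp
  also have "\<dots> \<le> norm x + norm (cscale \<i> x)" using F_bound by (intro add_mono)
  finally show "norm (Complex (F x) (- F (cscale \<i> x))) \<le> 2 * norm x" by (simp add: norm_cscale)
qed

lemma hahn_banach_separation:
  fixes M :: "'x::complex_normed_vector set"
  assumes M0: "0 \<in> M" and M_add: "\<And>x y. x \<in> M \<Longrightarrow> y \<in> M \<Longrightarrow> x + y \<in> M"
    and M_cscale: "\<And>c x. x \<in> M \<Longrightarrow> cscale c x \<in> M" and x0: "x0 \<notin> closure M"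
  shows "\<exists>f::'x \<Rightarrow> complex. bounded_clinear f \<and> (\<forall>m\<in>M. f m = 0) \<and> f x0 \<noteq> 0"
proof -
  define p where "p x = infdist x M" for x
  have p_add: "p (x + y) \<le> p x + p y" for x y
    unfolding p_def by (rule infdist_add_le[OF M0 M_add])
  have p_scale: "p (c *\<^sub>R x) = \<bar>c\<bar> * p x" for c x
    unfolding p_def by (rule infdist_scaleR[OF M0]) (simp add: scaleR_cscale M_cscale)
  obtain F where F_add: "\<And>x y. F (x + y) = F x + F y" and F_scale: "\<And>c x. F (c *\<^sub>R x) = c * F x"
    and F_le: "\<And>x. F x \<le> p x" and F_x0: "F x0 = p x0"
    using hahn_banach_sublinear[of p x0] p_add p_scale by auto
  have F_abs: "\<bar>F x\<bar> \<le> p x" for x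
    using F_le[of x] F_le[of "- x"] F_scale[of "-1" x] p_scale[of "-1" x] by simp
  have "p x \<le> norm x" for x unfolding p_def using infdist_le[OF M0, of x] by simp
  then have "bounded_clinear (\<lambda>x. Complex (F x) (- F (cscale \<i> x)))"
    using F_abs order_trans by (intro bounded_clinear_complexify F_add F_scale) blast
  moreover have "Complex (F m) (- F (cscale \<i> m)) = 0" if "m \<in> M" for m
    using F_abs[of m] F_abs[of "cscale \<i> m"] that M_cscale by (simp add: p_def complex_eq_iff)
  moreover have "p x0 \<noteq> 0"
    using x0 in_closure_iff_infdist_zero[of M x0] M0 by (auto simp: p_def)
  then have "Complex (F x0) (- F (cscale \<i> x0)) \<noteq> 0" using F_x0 by (simp add: complex_eq_iff)
  ultimately show ?thesis by blast
qed

lemma exists_bounded_clinear_nonzero: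
  fixes x :: "'x::complex_normed_vector"
  assumes "x \<noteq> 0"
  shows "\<exists>f::'x \<Rightarrow> complex. bounded_clinear f \<and> f x \<noteq> 0"
  using hahn_banach_separation[of "{0}" x] assms by auto

section \<open>Dense range in reflexive spaces\<close>

lemma cluster_point_mem_closed:
  fixes s :: "nat \<Rightarrow> 'v::topological_space"
  assumes "inf (nhds c) (filtermap s sequentially) \<noteq> bot" "closed S"
    and "eventually (\<lambda>n. s n \<in> S) sequentially"
  shows "c \<in> S"
proof (rule ccontr)
  assume "c \<notin> S"
  then have "eventually (\<lambda>v. v \<in> - S) (nhds c)" using assms(2) by (intro eventually_nhds_in_open) auto
  moreover have "eventually (\<lambda>v. v \<in> S) (filtermap s sequentially)"
    using assms(3) by (simp add: eventually_filtermap)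
  ultimately have "eventually (\<lambda>v. False) (inf (nhds c) (filtermap s sequentially))"
    unfolding eventually_inf by blast
  then show False using assms(1) by (simp add: eventually_False)
qed

text \<open>Tychonoff: the evaluations \<open>g \<mapsto> g (s n)\<close> at bounded functionals \<open>g\<close> lie in a compact
  product of discs.\<close>

lemma evaluations_cluster_point:
  fixes s :: "nat \<Rightarrow> 'x::complex_normed_vector"
  assumes bounded: "\<And>n. norm (s n) \<le> R"
  obtains c :: "('x \<Rightarrow> complex) \<Rightarrow> complex" where
    "\<And>S. closed S \<Longrightarrow> eventually (\<lambda>n. (\<lambda>g. if bounded_clinear g then g (s n) else 0) \<in> S) sequentially
      \<Longrightarrow> c \<in> S"
    "\<And>g. bounded_clinear g \<Longrightarrow> cmod (c g) \<le> R * onorm g"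
proof -
  define ev where "ev n = (\<lambda>g::'x \<Rightarrow> complex. if bounded_clinear g then g (s n) else 0)" for n
  define r where "r g = (if bounded_clinear g then onorm g * R else 0)" for g :: "'x \<Rightarrow> complex"
  have "cmod (g (s n)) \<le> onorm g * R" if g: "bounded_clinear g" for g n
    using bounded_clinear_norm[OF g, of "s n"] bounded[of n] bounded_clinear_onorm_nonneg[OF g]
    by (meson mult_left_mono order_trans)
  then have ev_mem: "ev n \<in> PiE UNIV (\<lambda>g. cball 0 (r g))" for n
    by (auto simp: ev_def r_def PiE_def extensional_def)
  have "compactin (product_topology (\<lambda>i. euclidean) UNIV) (PiE UNIV (\<lambda>g. cball (0::complex) (r g)))"
    by (subst compactin_PiE) auto
  then have "compact (PiE UNIV (\<lambda>g. cball (0::complex) (r g)))"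
    by (simp add: euclidean_product_topology)
  then obtain c where cluster: "inf (nhds c) (filtermap ev sequentially) \<noteq> bot"
    using ev_mem unfolding compact_filter
    by (auto dest!: spec[of _ "filtermap ev sequentially"] simp: filtermap_bot_iff eventually_filtermap)
  then have closed_mem: "c \<in> S" if "closed S" "eventually (\<lambda>n. ev n \<in> S) sequentially" for S
    using cluster_point_mem_closed that by blast
  moreover have "cmod (c g) \<le> R * onorm g" if g: "bounded_clinear g" for g
  proof -
    have "closed {v :: ('x \<Rightarrow> complex) \<Rightarrow> complex. cmod (v g) \<le> r g}"
      by (intro closed_Collect_le continuous_intros continuous_on_product_coordinates)
    moreover have "\<forall>n. ev n \<in> {v. cmod (v g) \<le> r g}"
      using ev_mem by (auto simp: PiE_def Pi_def)
    ultimately have "c \<in> {v. cmod (v g) \<le> r g}"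
      using closed_mem always_eventually by blast
    then show ?thesis using g by (simp add: r_def mult.commute)
  qed
  ultimately show ?thesis using that unfolding ev_def by blast
qed

text \<open>A cluster point of the evaluations is a bounded linear functional on the dual, which
  reflexivity represents by a point \<open>y\<close>.\<close>

lemma reflexive_weak_cluster_point:
  fixes s :: "nat \<Rightarrow> 'x::complex_normed_vector"
  assumes refl: "reflexive_space TYPE('x)" and bounded: "\<And>n. norm (s n) \<le> R"
  obtains y where
    "\<And>(g :: 'x \<Rightarrow> complex) L. bounded_clinear g \<Longrightarrow> ((\<lambda>n. g (s n)) \<longlongrightarrow> L) sequentially \<Longrightarrow> g y = L"
proof -
  obtain c :: "('x \<Rightarrow> complex) \<Rightarrow> complex" where
    closed_mem: "\<And>S. closed S \<Longrightarrow>
      eventually (\<lambda>n. (\<lambda>g. if bounded_clinear g then g (s n) else 0) \<in> S) sequentially \<Longrightarrow> c \<in> S"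
    and c_bound: "\<And>g. bounded_clinear g \<Longrightarrow> cmod (c g) \<le> R * onorm g"
    by (rule evaluations_cluster_point[where s=s and R=R, OF bounded]) blast
  have c_add: "c (\<lambda>x. f x + g x) = c f + c g" if "bounded_clinear f" "bounded_clinear g" for f g
  proof -
    have "closed {v :: ('x \<Rightarrow> complex) \<Rightarrow> complex. v (\<lambda>x. f x + g x) = v f + v g}"
      by (intro closed_Collect_eq continuous_intros continuous_on_product_coordinates)
    moreover have "\<forall>n. (\<lambda>h. if bounded_clinear h then h (s n) else 0) \<in> {v. v (\<lambda>x. f x + g x) = v f + v g}"
      using that bounded_clinear_plus[OF that] by simp
    ultimately have "c \<in> {v. v (\<lambda>x. f x + g x) = v f + v g}"
      using closed_mem always_eventually by blast
    then show ?thesis by simp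
  qed
  have c_mult: "c (\<lambda>x. a * f x) = a * c f" if f: "bounded_clinear f" for a f
  proof -
    have "bounded_clinear (\<lambda>x. a * f x)"
      using bounded_clinear_cscale_left[OF f, of a] by (simp add: cscale_complex_def)
    then have "\<forall>n. (\<lambda>h. if bounded_clinear h then h (s n) else 0) \<in> {v. v (\<lambda>x. a * f x) = a * v f}"
      using f by simp
    moreover have "closed {v :: ('x \<Rightarrow> complex) \<Rightarrow> complex. v (\<lambda>x. a * f x) = a * v f}"
      by (intro closed_Collect_eq continuous_intros continuous_on_product_coordinates)
    ultimately have "c \<in> {v. v (\<lambda>x. a * f x) = a * v f}"
      using closed_mem always_eventually by blast
    then show ?thesis by simp
  qed
  obtain y where y: "\<forall>g. bounded_clinear g \<longrightarrow> c g = g y"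
    using refl c_add c_mult c_bound unfolding reflexive_space_def by blast
  show ?thesis
  proof (rule that)
    fix g :: "'x \<Rightarrow> complex" and L
    assume g: "bounded_clinear g" and lim: "((\<lambda>n. g (s n)) \<longlongrightarrow> L) sequentially"
    have "cmod (c g - L) \<le> e" if e: "e > 0" for e
    proof -
      have "closed {v :: ('x \<Rightarrow> complex) \<Rightarrow> complex. cmod (v g - L) \<le> e}"
        by (intro closed_Collect_le continuous_intros continuous_on_product_coordinates)
      moreover have "eventually (\<lambda>n. (\<lambda>h. if bounded_clinear h then h (s n) else 0)
          \<in> {v. cmod (v g - L) \<le> e}) sequentially"
        using tendstoD[OF lim e] g by (auto elim!: eventually_mono simp: dist_norm)
      ultimately have "c \<in> {v. cmod (v g - L) \<le> e}" by (rule closed_mem)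
      then show ?thesis by simp
    qed
    then have "c g = L" using field_le_epsilon[of "cmod (c g - L)" 0] by simp
    then show "g y = L" using y g by simp
  qed
qed

lemma clinear_on_image_subspace:
  assumes lin: "clinear_on DT T"
  shows "0 \<in> T ` DT" "\<And>x y. x \<in> T ` DT \<Longrightarrow> y \<in> T ` DT \<Longrightarrow> x + y \<in> T ` DT"
    "\<And>c x. x \<in> T ` DT \<Longrightarrow> cscale c x \<in> T ` DT"
proof -
  show "0 \<in> T ` DT"
    using clinear_on_zero[OF lin] clinear_on_zero_mem[OF lin] by force
  fix x y c assume x: "x \<in> T ` DT"
  then obtain a where a: "a \<in> DT" "x = T a" by blast
  then show "cscale c x \<in> T ` DT"
    using clinear_on_cscale[OF lin] clinear_on_cscale_mem[OF lin] by (metis image_eqI)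
  assume "y \<in> T ` DT"
  then obtain b where "b \<in> DT" "y = T b" by blast
  with a show "x + y \<in> T ` DT"
    using clinear_on_add[OF lin] clinear_on_add_mem[OF lin] by (metis image_eqI)
qed

text \<open>On the domain \<open>\<lambda> R(\<lambda>,T) - I = R(\<lambda>,T) T\<close>, so a weak limit of vectors \<open>s n\<close> with
  \<open>T (s n) \<rightarrow> 0\<close> is fixed by \<open>\<lambda> R(\<lambda>,T)\<close>.\<close>

lemma weak_limit_in_kernel:
  fixes DT :: "'x::complex_normed_vector set"
  assumes lin: "clinear_on DT T" and l: "l \<in> resolvent_set DT T"
    and s: "\<And>n. s n \<in> DT" and Ts: "(\<lambda>n. T (s n)) \<longlonglongrightarrow> 0"
    and y: "\<And>(g :: 'x \<Rightarrow> complex) L. bounded_clinear g \<Longrightarrow> ((\<lambda>n. g (s n)) \<longlongrightarrow> L) sequentially \<Longrightarrow> g y = L"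
  shows "y \<in> DT" "T y = 0"
proof -
  define P where "P x = cscale l (resolvent DT T l x)" for x
  have P_diff: "P x - x = T (resolvent DT T l x)" for x
    using apply_resolvent[OF l] by (simp add: P_def)
  have "P y = y"
  proof (rule ccontr)
    assume "P y \<noteq> y"
    then obtain h :: "'x \<Rightarrow> complex" where h: "bounded_clinear h" "h (P y - y) \<noteq> 0"
      using exists_bounded_clinear_nonzero[of "P y - y"] by auto
    have "bounded_clinear (\<lambda>x. h (P x - x))"
      unfolding P_def by (intro bounded_clinear_compose[OF h(1)] bounded_clinear_minus
          bounded_clinear_ident scaled_resolvent_bounded_clinear[OF l])
    moreover have "bounded_linear (\<lambda>v. h (resolvent DT T l v))"
      using bounded_clinear_compose[OF h(1) resolvent_bounded_clinear[OF l]]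
      by (rule bounded_clinear_imp_bounded_linear)
    then have "(\<lambda>n. h (resolvent DT T l (T (s n)))) \<longlonglongrightarrow> 0"
      using bounded_linear.tendsto_zero[OF _ Ts] by blast
    then have "(\<lambda>n. h (P (s n) - s n)) \<longlonglongrightarrow> 0"
      using resolvent_commute[OF l s] by (simp add: P_diff)
    ultimately show False using y h(2) by blast
  qed
  then show "y \<in> DT"
    using clinear_on_cscale_mem[OF lin resolvent_mem[OF l]] by (metis P_def)
  have "T y = cscale l (T (resolvent DT T l y))"
    using \<open>P y = y\<close> clinear_on_cscale[OF lin resolvent_mem[OF l]] by (metis P_def)
  then show "T y = 0"
    using P_diff[of y] \<open>P y = y\<close> by simp
qed

text \<open>For \<open>\<lambda> = -t\<close> the vectors \<open>\<lambda> R(\<lambda>,T) x\<^sub>0\<close> are bounded, differ from \<open>x\<^sub>0\<close> by elements of the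
  range and have images of size \<open>O(t)\<close>.  A weak cluster point as \<open>t \<rightarrow> 0\<close> lies in the kernel, hence is
  \<open>0\<close>, so no functional vanishing on the range separates \<open>x\<^sub>0\<close> from it.\<close>

lemma dense_range_if_reflexive:
  fixes DT :: "'x::complex_normed_vector set"
  assumes refl: "reflexive_space TYPE('x)" and lin: "clinear_on DT T" and "sect_cond DT T \<phi>"
    and inj: "\<And>x. x \<in> DT \<Longrightarrow> T x = 0 \<Longrightarrow> x = 0"
  shows "closure (T ` DT) = UNIV"
proof (rule ccontr)
  assume "closure (T ` DT) \<noteq> UNIV"
  then obtain x0 where "x0 \<notin> closure (T ` DT)" by blast
  then obtain f :: "'x \<Rightarrow> complex" where f: "bounded_clinear f" "\<forall>m\<in>T ` DT. f m = 0" "f x0 \<noteq> 0"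
    using hahn_banach_separation[of "T ` DT" x0] clinear_on_image_subspace[OF lin] by blast
  obtain K where "0 \<le> K" and res: "\<And>t. t > 0 \<Longrightarrow> complex_of_real (- t) \<in> resolvent_set DT T"
    and bound: "\<And>t x. t > 0 \<Longrightarrow>
      norm (cscale (complex_of_real (- t)) (resolvent DT T (complex_of_real (- t)) x)) \<le> K * norm x"
    using sect_cond_negative_axis[OF \<open>sect_cond DT T \<phi>\<close>] by metis
  define t where "t n = inverse (real (Suc n))" for n
  define s where "s n = cscale (complex_of_real (- t n)) (resolvent DT T (complex_of_real (- t n)) x0)" for n
  have t: "t n > 0" for n by (simp add: t_def)
  note res_t = res[OF t]
  have s_mem: "s n \<in> DT" for n
    using clinear_on_cscale_mem[OF lin resolvent_mem[OF res_t]] by (simp add: s_def)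
  have "f (s n) = f x0" for n
  proof -
    have "s n - x0 = T (resolvent DT T (complex_of_real (- t n)) x0)"
      using apply_resolvent[OF res_t] by (simp add: s_def)
    then have "f (s n - x0) = 0" using f(2) resolvent_mem[OF res_t] by auto
    then show ?thesis using bounded_clinear_diff[OF f(1)] by simp
  qed
  have "(\<lambda>n. t n * (K + 1) * norm x0) \<longlonglongrightarrow> 0"
    unfolding t_def by (intro tendsto_mult_left_zero LIMSEQ_inverse_real_of_nat)
  moreover have "eventually (\<lambda>n. norm (T (s n)) \<le> t n * (K + 1) * norm x0) sequentially"
    using norm_apply_scaled_resolvent_le[OF lin res_t bound[OF t]] t
    by (intro always_eventually) (simp add: s_def abs_of_pos)
  ultimately have "(\<lambda>n. T (s n)) \<longlonglongrightarrow> 0"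
    by (rule Lim_null_comparison[rotated])
  obtain y where y: "\<And>(g :: 'x \<Rightarrow> complex) L. bounded_clinear g \<Longrightarrow>
      ((\<lambda>n. g (s n)) \<longlongrightarrow> L) sequentially \<Longrightarrow> g y = L"
    using reflexive_weak_cluster_point[OF refl, of s "K * norm x0"] bound[OF t] by (metis s_def)
  have "y \<in> DT" "T y = 0"
    using weak_limit_in_kernel[OF lin res[of 1] s_mem \<open>(\<lambda>n. T (s n)) \<longlonglongrightarrow> 0\<close> y] by simp_all
  then have "y = 0" by (rule inj)
  moreover have "f y = f x0" using y[OF f(1)] \<open>\<And>n. f (s n) = f x0\<close> by simp
  ultimately show False using f(3) bounded_clinear_zero[OF f(1)] by simp
qed

section \<open>Block operator matrices\<close>

lemma bounded_clinear_relatively_bounded_resolvent: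
  assumes l: "l \<in> resolvent_set DT T" and S: "clinear_on DS S" "DT \<subseteq> DS"
    and bound: "\<forall>y\<in>DT. norm (S y) \<le> c * norm (T y)" and "0 \<le> c"
  shows "bounded_clinear (\<lambda>y. S (resolvent DT T l y))"
proof (rule bounded_clinear_intro[where K="c * (cmod l * onorm (resolvent DT T l) + 1)"])
  note R = resolvent_bounded_clinear[OF l] and R_mem = resolvent_mem[OF l]
  fix x y show "S (resolvent DT T l (x + y)) = S (resolvent DT T l x) + S (resolvent DT T l y)"
    using R_mem S by (simp add: bounded_clinear_add[OF R] clinear_on_add subset_iff)
next
  note R = resolvent_bounded_clinear[OF l] and R_mem = resolvent_mem[OF l]
  fix a x show "S (resolvent DT T l (cscale a x)) = cscale a (S (resolvent DT T l x))"
    using R_mem S by (simp add: bounded_clinear_cscale[OF R] clinear_on_cscale subset_iff)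
next
  note R = resolvent_bounded_clinear[OF l] and R_mem = resolvent_mem[OF l]
  fix y
  have "norm (T (resolvent DT T l y)) = norm (cscale l (resolvent DT T l y) - y)"
    by (simp add: apply_resolvent[OF l])
  also have "\<dots> \<le> cmod l * norm (resolvent DT T l y) + norm y"
    using norm_triangle_ineq4[of "cscale l (resolvent DT T l y)" y] by (simp add: norm_cscale)
  also have "\<dots> \<le> cmod l * (onorm (resolvent DT T l) * norm y) + norm y"
    by (intro add_right_mono mult_left_mono bounded_clinear_norm[OF R]) simp
  finally have "c * norm (T (resolvent DT T l y)) \<le> c * (cmod l * (onorm (resolvent DT T l) * norm y) + norm y)"
    using \<open>0 \<le> c\<close> by (rule mult_left_mono)
  moreover have "norm (S (resolvent DT T l y)) \<le> c * norm (T (resolvent DT T l y))"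
    using bound R_mem by blast
  ultimately show "norm (S (resolvent DT T l y)) \<le> c * (cmod l * onorm (resolvent DT T l) + 1) * norm y"
    by (simp add: algebra_simps)
qed

lemma rad_bounded_relatively_bounded_resolvent:
  assumes T: "clinear_on DT T" and S: "clinear_on DS S" "DT \<subseteq> DS"
    and bound: "\<forall>y\<in>DT. norm (S y) \<le> c * norm (T y)" and "0 \<le> c"
    and R: "rad_bounded_resolvents Q I DT T"
  shows "rad_bounded Q I (\<lambda>l y. S (resolvent DT T l y))"
proof (rule rad_bounded_dominated[OF _ \<open>0 \<le> c\<close>])
  show "rad_bounded Q I (\<lambda>l y. cscale l (resolvent DT T l y) - y)"
    using R rad_bounded_diff rad_bounded_id unfolding rad_bounded_resolvents_def by blast
next
  fix m ls xs and \<epsilon> :: "nat \<Rightarrow> real"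
  assume "Q m ls" and ls: "\<forall>n<m. ls n \<in> I"
  have res: "ls n \<in> resolvent_set DT T" if "n < m" for n
    using R ls that unfolding rad_bounded_resolvents_def by blast
  define s where "s = (\<Sum>n<m. \<epsilon> n *\<^sub>R resolvent DT T (ls n) (xs n))"
  have mem: "\<forall>n<m. resolvent DT T (ls n) (xs n) \<in> DT" using res resolvent_mem by blast
  then have "\<forall>n<m. resolvent DT T (ls n) (xs n) \<in> DS" using S(2) by blast
  then have "(\<Sum>n<m. \<epsilon> n *\<^sub>R S (resolvent DT T (ls n) (xs n))) = S s"
    unfolding s_def by (rule clinear_on_scaleR_sum(2)[OF S(1), symmetric])
  also have "norm (S s) \<le> c * norm (T s)"
    using bound clinear_on_scaleR_sum(1)[OF T mem] by (simp add: s_def)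
  also have "T s = (\<Sum>n<m. \<epsilon> n *\<^sub>R (cscale (ls n) (resolvent DT T (ls n) (xs n)) - xs n))"
    unfolding s_def clinear_on_scaleR_sum(2)[OF T mem] using res
    by (intro sum.cong refl) (simp add: apply_resolvent)
  finally show "norm (\<Sum>n<m. \<epsilon> n *\<^sub>R S (resolvent DT T (ls n) (xs n)))
      \<le> c * norm (\<Sum>n<m. \<epsilon> n *\<^sub>R (cscale (ls n) (resolvent DT T (ls n) (xs n)) - xs n))" .
qed

locale block_operator_matrix =
  fixes DA :: "'a::complex_normed_vector set" and A :: "'a \<Rightarrow> 'a"
    and DD :: "'b::complex_normed_vector set" and D :: "'b \<Rightarrow> 'b"
    and DB :: "'b set" and B :: "'b \<Rightarrow> 'a" and DC :: "'a set" and C :: "'a \<Rightarrow> 'b"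
    and cA cD K :: real
  assumes A_lin: "clinear_on DA A" and D_lin: "clinear_on DD D"
    and B_lin: "clinear_on DB B" and DD_subset: "DD \<subseteq> DB"
    and C_lin: "clinear_on DC C" and DA_subset: "DA \<subseteq> DC"
    and cA_nonneg: "0 \<le> cA" and cD_nonneg: "0 \<le> cD"
    and C_bound: "\<forall>x\<in>DA. norm (C x) \<le> cA * norm (A x)"
    and B_bound: "\<forall>y\<in>DD. norm (B y) \<le> cD * norm (D y)"
    and diagonal_bound: "\<forall>z\<in>DA \<times> DD. norm (block_op A (\<lambda>_. 0) (\<lambda>_. 0) D z) \<le> K * norm (block_op A B C D z)"
begin

abbreviation "\<A> \<equiv> block_op A B C D"
abbreviation "dom\<A> \<equiv> DA \<times> DD"
abbreviation "M\<^sub>1 \<equiv> M1 DA A B C DD D"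
abbreviation "M\<^sub>2 \<equiv> M2 DA A B C DD D"
abbreviation "R\<^sub>A \<equiv> resolvent DA A"
abbreviation "R\<^sub>D \<equiv> resolvent DD D"

lemma block_clinear_on: "clinear_on dom\<A> \<A>"
  by (rule clinear_on_block_op[OF A_lin D_lin B_lin DD_subset C_lin DA_subset])

lemma block_apply: "\<A> (u, v) = (A u + B v, C u + D v)"
  by (simp add: block_op_def)

text \<open>With \<open>W = M\<^sub>1(\<lambda>)\<^sup>-\<^sup>1\<close> and \<open>w = W (x + B R(\<lambda>,D) y)\<close>, the solution of \<open>(\<lambda> - \<A>)(u, v) = (x, y)\<close> is
  \<open>u = R(\<lambda>,A) w\<close>, \<open>v = R(\<lambda>,D) (y + C u)\<close>.\<close>

definition block_resolvent :: "complex \<Rightarrow> ('a \<Rightarrow> 'a) \<Rightarrow> 'a \<times> 'b \<Rightarrow> 'a \<times> 'b" where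
  "block_resolvent l W z =
    (R\<^sub>A l (W (fst z + B (R\<^sub>D l (snd z)))), R\<^sub>D l (snd z + C (R\<^sub>A l (W (fst z + B (R\<^sub>D l (snd z)))))))"

text \<open>If \<open>R(\<lambda>,\<A>)(x, 0) = (u, v)\<close> then \<open>v = R(\<lambda>,D) C u\<close>, hence \<open>x = M\<^sub>1(\<lambda>) (\<lambda> - A) u\<close>.\<close>

definition M1_inverse_via_block :: "complex \<Rightarrow> 'a \<Rightarrow> 'a" where
  "M1_inverse_via_block l x =
    cscale l (fst (resolvent dom\<A> \<A> l (x, 0))) - A (fst (resolvent dom\<A> \<A> l (x, 0)))"

text \<open>\<open>(I - X Y)\<^sup>-\<^sup>1 = I + X (I - Y X)\<^sup>-\<^sup>1 Y\<close> with \<open>X = B R(\<lambda>,D)\<close> and \<open>Y = C R(\<lambda>,A)\<close>.\<close>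

definition M1_inverse_via_M2 :: "complex \<Rightarrow> 'a \<Rightarrow> 'a" where
  "M1_inverse_via_M2 l x = x + B (R\<^sub>D l (inv (M\<^sub>2 l) (C (R\<^sub>A l x))))"

context
  fixes l assumes l_A: "l \<in> resolvent_set DA A" and l_D: "l \<in> resolvent_set DD D"
begin

lemma B_resolvent_bounded_clinear: "bounded_clinear (\<lambda>y. B (R\<^sub>D l y))"
  by (rule bounded_clinear_relatively_bounded_resolvent[OF l_D B_lin DD_subset B_bound cD_nonneg])

lemma C_resolvent_bounded_clinear: "bounded_clinear (\<lambda>x. C (R\<^sub>A l x))"
  by (rule bounded_clinear_relatively_bounded_resolvent[OF l_A C_lin DA_subset C_bound cA_nonneg])

lemmas B_resolvent_add = bounded_clinear_add[OF B_resolvent_bounded_clinear]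
  and B_resolvent_diff = bounded_clinear_diff[OF B_resolvent_bounded_clinear]
  and C_resolvent_add = bounded_clinear_add[OF C_resolvent_bounded_clinear]
  and C_resolvent_diff = bounded_clinear_diff[OF C_resolvent_bounded_clinear]

lemma block_resolvent_mem: "block_resolvent l W z \<in> dom\<A>"
  using resolvent_mem[OF l_A] resolvent_mem[OF l_D] by (simp add: block_resolvent_def)

lemma block_resolvent_right_inverse:
  assumes "\<And>w. M\<^sub>1 l (W w) = w"
  shows "cscale l (block_resolvent l W z) - \<A> (block_resolvent l W z) = z"
proof -
  define w where "w = W (fst z + B (R\<^sub>D l (snd z)))"
  define u where "u = R\<^sub>A l w"
  define v where "v = R\<^sub>D l (snd z + C u)"
  have "B v = B (R\<^sub>D l (snd z)) + B (R\<^sub>D l (C u))"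
    unfolding v_def by (rule B_resolvent_add)
  moreover have "w - B (R\<^sub>D l (C u)) = fst z + B (R\<^sub>D l (snd z))"
    using assms[of "fst z + B (R\<^sub>D l (snd z))"] by (simp add: M1_def w_def u_def)
  moreover have "cscale l u - A u = w"
    unfolding u_def by (rule resolvent_right_inverse[OF l_A])
  moreover have "cscale l v - D v = snd z + C u"
    unfolding v_def by (rule resolvent_right_inverse[OF l_D])
  moreover have "block_resolvent l W z = (u, v)"
    by (simp add: block_resolvent_def w_def u_def v_def)
  ultimately show ?thesis
    by (simp add: block_apply cscale_prod_def algebra_simps)
qed

lemma block_resolvent_left_inverse:
  assumes "\<And>w. W (M\<^sub>1 l w) = w" and "p \<in> dom\<A>"
  shows "block_resolvent l W (cscale l p - \<A> p) = p"
proof -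
  obtain a b where p: "p = (a, b)" and a: "a \<in> DA" and b: "b \<in> DD" using assms(2) by auto
  define w where "w = cscale l a - A a"
  have R_w: "R\<^sub>A l w = a" unfolding w_def by (rule resolvent_left_inverse[OF l_A a])
  have "B (R\<^sub>D l ((cscale l b - D b) - C a)) = B b - B (R\<^sub>D l (C (R\<^sub>A l w)))"
    using resolvent_left_inverse[OF l_D b] by (simp add: B_resolvent_diff R_w)
  then have "(w - B b) + B (R\<^sub>D l ((cscale l b - D b) - C a)) = M\<^sub>1 l w"
    by (simp add: M1_def)
  moreover have "cscale l p - \<A> p = (w - B b, (cscale l b - D b) - C a)"
    by (simp add: p block_apply cscale_prod_def w_def algebra_simps)
  ultimately show ?thesis
    using assms(1) resolvent_left_inverse[OF l_D b] by (simp add: block_resolvent_def R_w p)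
qed

lemma block_resolvent_bounded_clinear:
  assumes "bounded_clinear W"
  shows "bounded_clinear (block_resolvent l W)"
proof -
  note BR = B_resolvent_bounded_clinear and CR = C_resolvent_bounded_clinear
  have w: "bounded_clinear (\<lambda>z. W (fst z + B (R\<^sub>D l (snd z))))"
    by (intro bounded_clinear_compose[OF assms] bounded_clinear_plus bounded_clinear_fst
        bounded_clinear_compose[OF BR] bounded_clinear_snd)
  show ?thesis
    unfolding block_resolvent_def[abs_def]
    by (intro bounded_clinear_Pair bounded_clinear_compose[OF resolvent_bounded_clinear[OF l_A] w]
        bounded_clinear_compose[OF resolvent_bounded_clinear[OF l_D]] bounded_clinear_plus
        bounded_clinear_snd bounded_clinear_compose[OF CR w])
qed

lemma resolvent_block_if_M1_invertible:
  assumes "invertible_bdd (M\<^sub>1 l)"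
  shows "l \<in> resolvent_set dom\<A> \<A>" "resolvent dom\<A> \<A> l = block_resolvent l (inv (M\<^sub>1 l))"
proof -
  note W = invertible_bddD[OF assms]
  have bij: "bij_betw (\<lambda>x. cscale l x - \<A> x) dom\<A> UNIV"
  proof (rule bij_betw_byWitness[where f'="block_resolvent l (inv (M\<^sub>1 l))"])
    show "\<forall>p\<in>dom\<A>. block_resolvent l (inv (M\<^sub>1 l)) (cscale l p - \<A> p) = p"
      using block_resolvent_left_inverse[OF W(2)] by blast
    show "\<forall>z\<in>UNIV. cscale l (block_resolvent l (inv (M\<^sub>1 l)) z) - \<A> (block_resolvent l (inv (M\<^sub>1 l)) z) = z"
      using block_resolvent_right_inverse[OF W(1)] by blast
    show "block_resolvent l (inv (M\<^sub>1 l)) ` UNIV \<subseteq> dom\<A>"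
      using block_resolvent_mem by blast
  qed simp
  show eq: "resolvent dom\<A> \<A> l = block_resolvent l (inv (M\<^sub>1 l))"
    using bij_betw_imp_inj_on[OF bij] block_resolvent_mem block_resolvent_right_inverse[OF W(1)]
    by (intro ext resolvent_eqI) auto
  show "l \<in> resolvent_set dom\<A> \<A>"
    unfolding resolvent_set_def using bij eq block_resolvent_bounded_clinear[OF W(3)] by simp
qed

lemma M1_inverse_via_block_inverse:
  assumes l: "l \<in> resolvent_set dom\<A> \<A>"
  shows "M\<^sub>1 l (M1_inverse_via_block l x) = x" "M1_inverse_via_block l (M\<^sub>1 l x) = x"
proof -
  define R where "R = resolvent dom\<A> \<A> l"
  obtain u v where uv: "R (x, 0) = (u, v)" by (cases "R (x, 0)")
  have u: "u \<in> DA" and v: "v \<in> DD" using resolvent_mem[OF l, of "(x, 0)"] uv by (auto simp: R_def)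
  have e: "cscale l u - (A u + B v) = x" "cscale l v - (C u + D v) = 0"
    using resolvent_right_inverse[OF l, of "(x, 0)"] uv by (auto simp: R_def block_apply cscale_prod_def)
  define w where "w = cscale l u - A u"
  have "R\<^sub>A l w = u" unfolding w_def by (rule resolvent_left_inverse[OF l_A u])
  moreover have "R\<^sub>D l (C u) = v"
    using resolvent_left_inverse[OF l_D v] e(2) by (simp add: algebra_simps)
  ultimately show "M\<^sub>1 l (M1_inverse_via_block l x) = x"
    using e(1) by (simp add: M1_def M1_inverse_via_block_def R_def[symmetric] uv w_def algebra_simps)
next
  define u where "u = R\<^sub>A l x"
  define v where "v = R\<^sub>D l (C u)"
  have uv: "(u, v) \<in> dom\<A>" using resolvent_mem[OF l_A] resolvent_mem[OF l_D] by (simp add: u_def v_def)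
  have "cscale l (u, v) - \<A> (u, v) = (M\<^sub>1 l x, 0)"
    using resolvent_right_inverse[OF l_A, of x] resolvent_right_inverse[OF l_D, of "C u"]
    by (simp add: block_apply cscale_prod_def M1_def u_def v_def algebra_simps)
  then have "resolvent dom\<A> \<A> l (M\<^sub>1 l x, 0) = (u, v)"
    using resolvent_left_inverse[OF assms uv] by simp
  then show "M1_inverse_via_block l (M\<^sub>1 l x) = x"
    using resolvent_right_inverse[OF l_A, of x] by (simp add: M1_inverse_via_block_def u_def)
qed

lemma M1_inverse_via_block_bounded_clinear:
  assumes l: "l \<in> resolvent_set dom\<A> \<A>"
  shows "bounded_clinear (M1_inverse_via_block l)"
proof -
  define R where "R = resolvent dom\<A> \<A> l"
  have R: "bounded_clinear R" unfolding R_def by (rule resolvent_bounded_clinear[OF l])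
  have first: "bounded_clinear (\<lambda>x. fst (R (x, 0)))"
    by (intro bounded_clinear_compose[OF bounded_clinear_fst] bounded_clinear_compose[OF R]
        bounded_clinear_Pair_zero)
  have mem: "fst (R z) \<in> DA" for z using resolvent_mem[OF l] by (auto simp: R_def mem_Times_iff)
  have "bounded_clinear (\<lambda>x. A (fst (R (x, 0))))"
  proof (rule bounded_clinear_intro[where K="\<bar>K\<bar> * (cmod l * onorm R + 1)"])
    fix x y :: 'a
    show "A (fst (R (x + y, 0))) = A (fst (R (x, 0))) + A (fst (R (y, 0)))"
      using bounded_clinear_add[OF first, of x y] mem clinear_on_add[OF A_lin] by simp
  next
    fix c x
    show "A (fst (R (cscale c x, 0))) = cscale c (A (fst (R (x, 0))))"
      using bounded_clinear_cscale[OF first, of c x] mem clinear_on_cscale[OF A_lin] by simp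
  next
    fix x :: 'a
    have "norm (\<A> (R (x, 0))) = norm (cscale l (R (x, 0)) - (x, 0))"
      using apply_resolvent[OF l, of "(x, 0)"] by (simp add: R_def)
    also have "\<dots> \<le> cmod l * norm (R (x, 0)) + norm (x, 0::'b)"
      using norm_triangle_ineq4[of "cscale l (R (x, 0))" "(x, 0)"] by (simp add: norm_cscale)
    also have "\<dots> \<le> cmod l * (onorm R * norm (x, 0::'b)) + norm (x, 0::'b)"
      by (intro add_right_mono mult_left_mono bounded_clinear_norm[OF R]) simp
    finally have AR: "norm (\<A> (R (x, 0))) \<le> cmod l * onorm R * norm x + norm x"
      by (simp add: norm_Pair mult.assoc)
    have "norm (A (fst (R (x, 0)))) \<le> norm (block_op A (\<lambda>_. 0) (\<lambda>_. 0) D (R (x, 0)))"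
      by (simp add: block_op_def norm_Pair)
    also have "\<dots> \<le> \<bar>K\<bar> * norm (\<A> (R (x, 0)))"
      using diagonal_bound resolvent_mem[OF l] unfolding R_def
      by (meson abs_ge_self mult_right_mono norm_ge_zero order_trans)
    also have "\<dots> \<le> \<bar>K\<bar> * (cmod l * onorm R * norm x + norm x)"
      using AR by (intro mult_left_mono) auto
    finally show "norm (A (fst (R (x, 0)))) \<le> \<bar>K\<bar> * (cmod l * onorm R + 1) * norm x"
      by (simp add: algebra_simps)
  qed
  then show ?thesis
    unfolding M1_inverse_via_block_def[abs_def] R_def[symmetric]
    by (intro bounded_clinear_minus bounded_clinear_cscale_left first)
qed

lemma M1_invertible_if_block_resolvent:
  assumes "l \<in> resolvent_set dom\<A> \<A>"
  shows "invertible_bdd (M\<^sub>1 l)" "inv (M\<^sub>1 l) = M1_inverse_via_block l"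
  using invertible_bddI[OF M1_inverse_via_block_bounded_clinear M1_inverse_via_block_inverse] assms
  by blast+

lemma M1_invertible_if_M2_invertible:
  assumes "invertible_bdd (M\<^sub>2 l)"
  shows "invertible_bdd (M\<^sub>1 l)" "inv (M\<^sub>1 l) = M1_inverse_via_M2 l"
proof -
  note W = invertible_bddD[OF assms]
  have "M\<^sub>1 l (M1_inverse_via_M2 l x) = x" for x
  proof -
    let ?w = "inv (M\<^sub>2 l) (C (R\<^sub>A l x))"
    have "?w - C (R\<^sub>A l (B (R\<^sub>D l ?w))) = C (R\<^sub>A l x)"
      using W(1)[of "C (R\<^sub>A l x)"] by (simp add: M2_def)
    then show ?thesis
      by (simp add: M1_def M1_inverse_via_M2_def C_resolvent_add B_resolvent_add B_resolvent_diff[symmetric]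
          bounded_clinear_zero[OF B_resolvent_bounded_clinear] algebra_simps)
  qed
  moreover have "M1_inverse_via_M2 l (M\<^sub>1 l x) = x" for x
  proof -
    have "C (R\<^sub>A l (M\<^sub>1 l x)) = M\<^sub>2 l (C (R\<^sub>A l x))"
      by (simp add: M1_def M2_def C_resolvent_diff)
    then show ?thesis by (simp add: M1_inverse_via_M2_def W(2) M1_def)
  qed
  moreover have "bounded_clinear (M1_inverse_via_M2 l)"
    unfolding M1_inverse_via_M2_def[abs_def]
    by (intro bounded_clinear_plus bounded_clinear_ident bounded_clinear_compose[OF B_resolvent_bounded_clinear]
        bounded_clinear_compose[OF W(3)] C_resolvent_bounded_clinear)
  ultimately show "invertible_bdd (M\<^sub>1 l)" "inv (M\<^sub>1 l) = M1_inverse_via_M2 l"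
    using invertible_bddI by blast+
qed

end

end

context block_operator_matrix
begin

context
  fixes Q :: "nat \<Rightarrow> (nat \<Rightarrow> complex) \<Rightarrow> bool" and I :: "complex set"
  assumes A_res: "rad_bounded_resolvents Q I DA A" and D_res: "rad_bounded_resolvents Q I DD D"
begin

lemma rad_bounded_B_resolvent: "rad_bounded Q I (\<lambda>l y. B (R\<^sub>D l y))"
  by (rule rad_bounded_relatively_bounded_resolvent[OF D_lin B_lin DD_subset B_bound cD_nonneg D_res])

lemma rad_bounded_C_resolvent: "rad_bounded Q I (\<lambda>l x. C (R\<^sub>A l x))"
  by (rule rad_bounded_relatively_bounded_resolvent[OF A_lin C_lin DA_subset C_bound cA_nonneg A_res])

lemma in_resolvent_sets: "l \<in> I \<Longrightarrow> l \<in> resolvent_set DA A" "l \<in> I \<Longrightarrow> l \<in> resolvent_set DD D"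
  using A_res D_res by (auto simp: rad_bounded_resolvents_def)

lemma rad_bounded_block_resolvent_first_column:
  assumes "rad_bounded_resolvents Q I dom\<A> \<A>"
  shows "rad_bounded Q I (\<lambda>l x. cscale l (resolvent dom\<A> \<A> l (x, 0)))"
proof -
  have "bounded_linear (\<lambda>x::'a. (x, 0::'b))"
    by (intro bounded_linear_Pair bounded_linear_ident bounded_linear_zero)
  then show ?thesis
    using assms rad_bounded_compose[OF _ rad_bounded_const]
    unfolding rad_bounded_resolvents_def by blast
qed

lemma rad_bounded_resolvents_block_if_M1:
  assumes "rad_bounded_inverses Q I M\<^sub>1"
  shows "rad_bounded_resolvents Q I dom\<A> \<A>"
proof -
  have inv: "\<forall>l\<in>I. invertible_bdd (M\<^sub>1 l)" and W: "rad_bounded Q I (\<lambda>l. inv (M\<^sub>1 l))"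
    using assms by (auto simp: rad_bounded_inverses_def)
  have RA: "rad_bounded Q I (\<lambda>l x. cscale l (R\<^sub>A l x))" and RD: "rad_bounded Q I (\<lambda>l y. cscale l (R\<^sub>D l y))"
    using A_res D_res by (simp_all add: rad_bounded_resolvents_def)
  note fst = rad_bounded_const[OF bounded_linear_fst] and snd = rad_bounded_const[OF bounded_linear_snd]
  have w: "rad_bounded Q I (\<lambda>l z. inv (M\<^sub>1 l) (fst z + B (R\<^sub>D l (snd z))))"
    using rad_bounded_compose[OF W rad_bounded_add[OF fst rad_bounded_compose[OF rad_bounded_B_resolvent snd]]] .
  have "rad_bounded Q I (\<lambda>l z. (cscale l (R\<^sub>A l (inv (M\<^sub>1 l) (fst z + B (R\<^sub>D l (snd z))))),
      cscale l (R\<^sub>D l (snd z + C (R\<^sub>A l (inv (M\<^sub>1 l) (fst z + B (R\<^sub>D l (snd z)))))))))"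
    using rad_bounded_Pair[OF rad_bounded_compose[OF RA w]
        rad_bounded_compose[OF RD rad_bounded_add[OF snd rad_bounded_compose[OF rad_bounded_C_resolvent w]]]] .
  then have "rad_bounded Q I (\<lambda>l z. cscale l (resolvent dom\<A> \<A> l z))"
    using inv in_resolvent_sets
    by (elim rad_bounded_cong[rotated])
      (simp add: resolvent_block_if_M1_invertible(2) block_resolvent_def cscale_prod_def)
  then show ?thesis
    using inv in_resolvent_sets resolvent_block_if_M1_invertible(1)
    by (auto simp: rad_bounded_resolvents_def)
qed

lemma rad_bounded_inverses_M1_if_M2:
  assumes "rad_bounded_inverses Q I M\<^sub>2"
  shows "rad_bounded_inverses Q I M\<^sub>1"
proof -
  have inv: "\<forall>l\<in>I. invertible_bdd (M\<^sub>2 l)" and W: "rad_bounded Q I (\<lambda>l. inv (M\<^sub>2 l))"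
    using assms by (auto simp: rad_bounded_inverses_def)
  have "rad_bounded Q I (\<lambda>l x. x + B (R\<^sub>D l (inv (M\<^sub>2 l) (C (R\<^sub>A l x)))))"
    using rad_bounded_add[OF rad_bounded_id
        rad_bounded_compose[OF rad_bounded_B_resolvent rad_bounded_compose[OF W rad_bounded_C_resolvent]]] .
  then have "rad_bounded Q I (\<lambda>l. inv (M\<^sub>1 l))"
    using inv in_resolvent_sets
    by (elim rad_bounded_cong[rotated]) (simp add: M1_invertible_if_M2_invertible(2) M1_inverse_via_M2_def)
  then show ?thesis
    using inv in_resolvent_sets M1_invertible_if_M2_invertible(1)
    by (auto simp: rad_bounded_inverses_def)
qed

text \<open>The diagonal bound \<open>\<parallel>A u\<parallel> \<le> \<parallel>\<D> (u, v)\<parallel> \<le> K \<parallel>\<A> (u, v)\<parallel>\<close> applied to Rademacher sums, together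
  with \<open>\<A> R(\<lambda>,\<A>) = \<lambda> R(\<lambda>,\<A>) - I\<close>.\<close>

lemma rad_bounded_A_resolvent_block:
  assumes R: "rad_bounded_resolvents Q I dom\<A> \<A>"
  shows "rad_bounded Q I (\<lambda>l x. A (fst (resolvent dom\<A> \<A> l (x, 0))))"
proof (rule rad_bounded_dominated[where c="\<bar>K\<bar>"])
  have "bounded_linear (\<lambda>x::'a. (x, 0::'b))"
    by (intro bounded_linear_Pair bounded_linear_ident bounded_linear_zero)
  then show "rad_bounded Q I (\<lambda>l x. cscale l (resolvent dom\<A> \<A> l (x, 0)) - (x, 0))"
    using rad_bounded_diff[OF rad_bounded_block_resolvent_first_column[OF R] rad_bounded_const] by blast
next
  fix m ls xs and \<epsilon> :: "nat \<Rightarrow> real"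
  assume "Q m ls" and ls: "\<forall>n<m. ls n \<in> I"
  have res: "ls n \<in> resolvent_set dom\<A> \<A>" if "n < m" for n
    using R ls that unfolding rad_bounded_resolvents_def by blast
  let ?R = "\<lambda>n. resolvent dom\<A> \<A> (ls n) (xs n, 0::'b)"
  define s where "s = (\<Sum>n<m. \<epsilon> n *\<^sub>R ?R n)"
  have mem: "\<forall>n<m. ?R n \<in> dom\<A>" using res resolvent_mem by blast
  then have "\<forall>n<m. fst (?R n) \<in> DA" by (auto simp: mem_Times_iff)
  then have "(\<Sum>n<m. \<epsilon> n *\<^sub>R A (fst (?R n))) = A (fst s)"
    unfolding s_def fst_sum fst_scaleR by (rule clinear_on_scaleR_sum(2)[OF A_lin, symmetric])
  also have "norm (A (fst s)) \<le> norm (block_op A (\<lambda>_. 0) (\<lambda>_. 0) D s)"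
    by (simp add: block_op_def norm_Pair)
  also have "\<dots> \<le> \<bar>K\<bar> * norm (\<A> s)"
    using diagonal_bound clinear_on_scaleR_sum(1)[OF block_clinear_on mem] unfolding s_def
    by (meson abs_ge_self mult_right_mono norm_ge_zero order_trans)
  also have "\<A> s = (\<Sum>n<m. \<epsilon> n *\<^sub>R (cscale (ls n) (?R n) - (xs n, 0)))"
    unfolding s_def clinear_on_scaleR_sum(2)[OF block_clinear_on mem] using res
    by (intro sum.cong refl) (simp add: apply_resolvent)
  finally show "norm (\<Sum>n<m. \<epsilon> n *\<^sub>R A (fst (?R n)))
      \<le> \<bar>K\<bar> * norm (\<Sum>n<m. \<epsilon> n *\<^sub>R (cscale (ls n) (?R n) - (xs n, 0)))" .
qed simp

lemma rad_bounded_inverses_M1_if_block: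
  assumes R: "rad_bounded_resolvents Q I dom\<A> \<A>"
  shows "rad_bounded_inverses Q I M\<^sub>1"
proof -
  have res: "\<forall>l\<in>I. l \<in> resolvent_set dom\<A> \<A>"
    using R by (auto simp: rad_bounded_resolvents_def)
  have "rad_bounded Q I (\<lambda>l x. fst (cscale l (resolvent dom\<A> \<A> l (x, 0))))"
    using rad_bounded_compose[OF rad_bounded_const[OF bounded_linear_fst]
        rad_bounded_block_resolvent_first_column[OF R]] .
  from rad_bounded_diff[OF this rad_bounded_A_resolvent_block[OF R]]
  have "rad_bounded Q I (\<lambda>l. inv (M\<^sub>1 l))"
    using res in_resolvent_sets
    by (elim rad_bounded_cong[rotated])
      (simp add: M1_invertible_if_block_resolvent(2) M1_inverse_via_block_def cscale_prod_def)
  then show ?thesis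
    using res in_resolvent_sets M1_invertible_if_block_resolvent(1)
    by (auto simp: rad_bounded_inverses_def)
qed

lemma rad_bounded_resolvents_block_iff:
  "rad_bounded_resolvents Q I dom\<A> \<A> \<longleftrightarrow> rad_bounded_inverses Q I M\<^sub>1"
  using rad_bounded_inverses_M1_if_block rad_bounded_resolvents_block_if_M1 by blast

end

lemma rad_bounded_resolvents_block_iff_sectors:
  assumes "\<And>\<phi>. \<psi> < \<phi> \<Longrightarrow> \<phi> < pi \<Longrightarrow>
    rad_bounded_resolvents Q (sector_compl \<phi>) DA A \<and> rad_bounded_resolvents Q (sector_compl \<phi>) DD D"
  shows "(\<forall>\<phi>. \<psi> < \<phi> \<and> \<phi> < pi \<longrightarrow> rad_bounded_resolvents Q (sector_compl \<phi>) dom\<A> \<A>) \<longleftrightarrow>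
    (\<forall>\<phi>. \<psi> < \<phi> \<and> \<phi> < pi \<longrightarrow> rad_bounded_inverses Q (sector_compl \<phi>) M\<^sub>1) \<or>
    (\<forall>\<phi>. \<psi> < \<phi> \<and> \<phi> < pi \<longrightarrow> rad_bounded_inverses Q (sector_compl \<phi>) M\<^sub>2)"
  using rad_bounded_resolvents_block_iff rad_bounded_inverses_M1_if_M2 assms by meson

lemma sectorial_block_resolvents_iff_M_cond:
  assumes "sectorial DA A" "sectorial DD D" "max (sect_angle DA A) (sect_angle DD D) \<le> \<psi>"
  shows "(\<forall>\<phi>. \<psi> < \<phi> \<and> \<phi> < pi \<longrightarrow> rad_bounded_resolvents constant_indices (sector_compl \<phi>) dom\<A> \<A>) \<longleftrightarrow>
    M_cond \<psi> M\<^sub>1 \<or> M_cond \<psi> M\<^sub>2"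
proof -
  have "rad_bounded_resolvents constant_indices (sector_compl \<phi>) DA A \<and>
      rad_bounded_resolvents constant_indices (sector_compl \<phi>) DD D" if "\<psi> < \<phi>" "\<phi> < pi" for \<phi>
    using sectorial_rad_bounded_resolvents[OF assms(1), of \<phi>]
      sectorial_rad_bounded_resolvents[OF assms(2), of \<phi>] assms(3) that by simp
  then show ?thesis
    unfolding M_cond_iff by (rule rad_bounded_resolvents_block_iff_sectors)
qed

lemma R_sectorial_block_resolvents_iff_M_R_cond:
  assumes "R_sectorial DA A" "R_sectorial DD D" "max (R_angle DA A) (R_angle DD D) \<le> \<psi>"
  shows "(\<forall>\<phi>. \<psi> < \<phi> \<and> \<phi> < pi \<longrightarrow> rad_bounded_resolvents (\<lambda>_ _. True) (sector_compl \<phi>) dom\<A> \<A>) \<longleftrightarrow>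
    M_R_cond \<psi> M\<^sub>1 \<or> M_R_cond \<psi> M\<^sub>2"
proof -
  have "rad_bounded_resolvents (\<lambda>_ _. True) (sector_compl \<phi>) DA A \<and>
      rad_bounded_resolvents (\<lambda>_ _. True) (sector_compl \<phi>) DD D" if "\<psi> < \<phi>" "\<phi> < pi" for \<phi>
    using R_sectorial_rad_bounded_resolvents[OF assms(1), of \<phi>]
      R_sectorial_rad_bounded_resolvents[OF assms(2), of \<phi>] assms(3) that by simp
  then show ?thesis
    unfolding M_R_cond_iff by (rule rad_bounded_resolvents_block_iff_sectors)
qed

lemma block_injective:
  assumes "sectorial DA A" "sectorial DD D" "z \<in> dom\<A>" "\<A> z = 0"
  shows "z = 0"
proof -
  have "norm (block_op A (\<lambda>_. 0) (\<lambda>_. 0) D z) \<le> K * norm (\<A> z)"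
    using diagonal_bound assms(3) by blast
  then have "A (fst z) = 0" "D (snd z) = 0"
    using assms(4) by (simp_all add: block_op_def zero_prod_def)
  then show "z = 0"
    using sectorial_injective[OF assms(1)] sectorial_injective[OF assms(2)] assms(3)
    by (auto simp: prod_eq_iff)
qed

lemma sectorial_of_angle_block_iff:
  assumes "sectorial DA A" "sectorial DD D" "max (sect_angle DA A) (sect_angle DD D) \<le> \<psi>" "\<psi> < pi"
  shows "sectorial_of_angle dom\<A> \<A> \<psi> \<longleftrightarrow> closure (\<A> ` dom\<A>) = UNIV \<and> (M_cond \<psi> M\<^sub>1 \<or> M_cond \<psi> M\<^sub>2)"
proof -
  have "0 \<le> \<psi>" using sect_angle_nonneg[OF assms(1)] assms(3) by linarith
  moreover have "closure dom\<A> = UNIV" using assms(1,2) by (simp add: sectorial_def closure_Times)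
  ultimately show ?thesis
    unfolding sectorial_of_angle_iff[OF \<open>0 \<le> \<psi>\<close> assms(4)]
      sectorial_block_resolvents_iff_M_cond[OF assms(1-3), symmetric]
    using block_clinear_on by blast
qed

lemma R_sectorial_of_angle_block_iff:
  assumes "R_sectorial DA A" "R_sectorial DD D" "max (R_angle DA A) (R_angle DD D) \<le> \<psi>" "\<psi> < pi"
  shows "R_sectorial_of_angle dom\<A> \<A> \<psi> \<longleftrightarrow> closure (\<A> ` dom\<A>) = UNIV \<and> (M_R_cond \<psi> M\<^sub>1 \<or> M_R_cond \<psi> M\<^sub>2)"
proof -
  have "sectorial DA A" "sectorial DD D" using assms(1,2) by (simp_all add: R_sectorial_def)
  then have "0 \<le> \<psi>"
    using sect_angle_nonneg sect_angle_le_R_angle[OF assms(1)] assms(3) by (meson max.boundedE order_trans)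
  moreover have "closure dom\<A> = UNIV"
    using \<open>sectorial DA A\<close> \<open>sectorial DD D\<close> by (simp add: sectorial_def closure_Times)
  ultimately show ?thesis
    unfolding R_sectorial_of_angle_iff[OF \<open>0 \<le> \<psi>\<close> assms(4)]
      R_sectorial_block_resolvents_iff_M_R_cond[OF assms(1-3), symmetric]
    using block_clinear_on by blast
qed

lemma block_dense_range_if_reflexive:
  assumes "reflexive_space TYPE('a \<times> 'b)" "sectorial DA A" "sectorial DD D" "0 \<le> \<psi>" "\<psi> < pi"
    and "\<forall>\<phi>. \<psi> < \<phi> \<and> \<phi> < pi \<longrightarrow> rad_bounded_resolvents constant_indices (sector_compl \<phi>) dom\<A> \<A>"
  shows "closure (\<A> ` dom\<A>) = UNIV"
proof -
  have "sect_cond dom\<A> \<A> ((\<psi> + pi) / 2)" using assms(4-6) by (simp add: sect_cond_iff)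
  then show ?thesis
    using dense_range_if_reflexive[OF assms(1) block_clinear_on] block_injective[OF assms(2,3)] by blast
qed

lemma dense_range_if_reflexive_M_cond:
  assumes "reflexive_space TYPE('a \<times> 'b)" "sectorial DA A" "sectorial DD D"
    and "max (sect_angle DA A) (sect_angle DD D) \<le> \<psi>" "\<psi> < pi" "M_cond \<psi> M\<^sub>1 \<or> M_cond \<psi> M\<^sub>2"
  shows "closure (\<A> ` dom\<A>) = UNIV"
proof (rule block_dense_range_if_reflexive[OF assms(1-3) _ assms(5)])
  show "0 \<le> \<psi>" using sect_angle_nonneg[OF assms(2)] assms(4) by linarith
  show "\<forall>\<phi>. \<psi> < \<phi> \<and> \<phi> < pi \<longrightarrow> rad_bounded_resolvents constant_indices (sector_compl \<phi>) dom\<A> \<A>"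
    using sectorial_block_resolvents_iff_M_cond[OF assms(2-4)] assms(6) by blast
qed

lemma dense_range_if_reflexive_M_R_cond:
  assumes "reflexive_space TYPE('a \<times> 'b)" "R_sectorial DA A" "R_sectorial DD D"
    and "max (R_angle DA A) (R_angle DD D) \<le> \<psi>" "\<psi> < pi" "M_R_cond \<psi> M\<^sub>1 \<or> M_R_cond \<psi> M\<^sub>2"
  shows "closure (\<A> ` dom\<A>) = UNIV"
proof -
  have "sectorial DA A" "sectorial DD D" using assms(2,3) by (simp_all add: R_sectorial_def)
  moreover have "0 \<le> \<psi>"
    using sect_angle_nonneg[OF \<open>sectorial DA A\<close>] sect_angle_le_R_angle[OF assms(2)] assms(4) by linarith
  moreover have "\<forall>\<phi>. \<psi> < \<phi> \<and> \<phi> < pi \<longrightarrow> rad_bounded_resolvents constant_indices (sector_compl \<phi>) dom\<A> \<A>"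
  proof (intro allI impI)
    fix \<phi> assume "\<psi> < \<phi> \<and> \<phi> < pi"
    then have "rad_bounded_resolvents (\<lambda>_ _. True) (sector_compl \<phi>) dom\<A> \<A>"
      using R_sectorial_block_resolvents_iff_M_R_cond[OF assms(2-4)] assms(6) by blast
    then show "rad_bounded_resolvents constant_indices (sector_compl \<phi>) dom\<A> \<A>"
      using rad_bounded_all_indices_imp unfolding rad_bounded_resolvents_def by blast
  qed
  ultimately show ?thesis
    using block_dense_range_if_reflexive[OF assms(1)] assms(5) by blast
qed

end

theorem theorem4p1:
  fixes DA :: "'a::{complex_normed_vector, banach} set" and A :: "'a \<Rightarrow> 'a"
    and DD :: "'b::{complex_normed_vector, banach} set" and D :: "'b \<Rightarrow> 'b"
    and DB :: "'b set" and B :: "'b \<Rightarrow> 'a"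
    and DC :: "'a set" and C :: "'a \<Rightarrow> 'b"
    and cA cD :: real
  assumes A_op: "clinear_on DA A" "closed_op DA A" "closure DA = UNIV"
    and D_op: "clinear_on DD D" "closed_op DD D" "closure DD = UNIV"
    and B_op: "clinear_on DB B" "DD \<subseteq> DB"
    and C_op: "clinear_on DC C" "DA \<subseteq> DC"
    and cnsts: "cA \<ge> 0" "cD \<ge> 0"
    and C_bound: "\<forall>x\<in>DA. norm (C x) \<le> cA * norm (A x)"
    and B_bound: "\<forall>y\<in>DD. norm (B y) \<le> cD * norm (D y)"
    and DA_bound: "\<exists>K. \<forall>z\<in>DA \<times> DD.
                     norm (block_op A (\<lambda>_. 0) (\<lambda>_. 0) D z) \<le> K * norm (block_op A B C D z)"
  shows
   "(sectorial DA A \<and> sectorial DD D \<longrightarrow>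
      (\<forall>\<psi>. max (sect_angle DA A) (sect_angle DD D) \<le> \<psi> \<and> \<psi> < pi \<longrightarrow>
        (sectorial_of_angle (DA \<times> DD) (block_op A B C D) \<psi> \<longleftrightarrow>
          closure (block_op A B C D ` (DA \<times> DD)) = UNIV \<and>
          (M_cond \<psi> (M1 DA A B C DD D) \<or> M_cond \<psi> (M2 DA A B C DD D))))) \<and>
    (R_sectorial DA A \<and> R_sectorial DD D \<longrightarrow>
      (\<forall>\<psi>. max (R_angle DA A) (R_angle DD D) \<le> \<psi> \<and> \<psi> < pi \<longrightarrow>
        (R_sectorial_of_angle (DA \<times> DD) (block_op A B C D) \<psi> \<longleftrightarrow>
          closure (block_op A B C D ` (DA \<times> DD)) = UNIV \<and>
          (M_R_cond \<psi> (M1 DA A B C DD D) \<or> M_R_cond \<psi> (M2 DA A B C DD D))))) \<and>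
    (reflexive_space TYPE('a \<times> 'b) \<longrightarrow>
      (sectorial DA A \<and> sectorial DD D \<longrightarrow>
        (\<forall>\<psi>. max (sect_angle DA A) (sect_angle DD D) \<le> \<psi> \<and> \<psi> < pi \<longrightarrow>
          (sectorial_of_angle (DA \<times> DD) (block_op A B C D) \<psi> \<longleftrightarrow>
            (M_cond \<psi> (M1 DA A B C DD D) \<or> M_cond \<psi> (M2 DA A B C DD D))))) \<and>
      (R_sectorial DA A \<and> R_sectorial DD D \<longrightarrow>
        (\<forall>\<psi>. max (R_angle DA A) (R_angle DD D) \<le> \<psi> \<and> \<psi> < pi \<longrightarrow>
          (R_sectorial_of_angle (DA \<times> DD) (block_op A B C D) \<psi> \<longleftrightarrow>
            (M_R_cond \<psi> (M1 DA A B C DD D) \<or> M_R_cond \<psi> (M2 DA A B C DD D))))))"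
proof -
  obtain K where "\<forall>z\<in>DA \<times> DD. norm (block_op A (\<lambda>_. 0) (\<lambda>_. 0) D z) \<le> K * norm (block_op A B C D z)"
    using DA_bound by blast
  then interpret block_operator_matrix DA A DD D DB B DC C cA cD K
    using A_op(1) D_op(1) B_op C_op cnsts C_bound B_bound by unfold_locales
  show ?thesis
    using sectorial_of_angle_block_iff R_sectorial_of_angle_block_iff
      dense_range_if_reflexive_M_cond dense_range_if_reflexive_M_R_cond
    by blast
qed

end
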